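(* Let $(\mathcal R,\tau)$ be a t-minimal Hausdorff geometric structure and $\mathcal S$ a lore of $(\mathcal R,\tau)$. Let $X$ and $Y$ be $A$-definable sets with $\dim(X)=\dim(Y)$, and let $f:X\to Y$ be a finite-to-one $A$-definable function. Let $x\in X$ be generic over $A$. Then $f$ restricts to a loric homeomorphism between a neighborhood of $x$ in $X$ and a neighborhood of $f(x)$ in $Y$.
   Context: A structure $\mathcal R$ is geometric if (in all models of its theory) $\operatorname{acl}$ satisfies exchange and $\mathcal R$ eliminates $\exists^\infty$; $\dim$ denotes acl-dimension of tuples and definable sets, and $a\in X$ is generic over $A$ if $\dim(a/A)=\dim(X)$. "Definable" allows parameters. Given a topology $\tau$ on $R$ (extended to definable subsets of $R^n$ by product and subspace topologies), $(\mathcal R,\tau)$ is a Hausdorff geometric structure if: (1) $\tau$ is Hausdorff; (2) $\mathcal R$ is geometric and $\aleph_1$-saturated; (3) if $X\subset R^n$ is $A$-definable and $a\in\overline{\overline X-X}$ then $\dim(a/A)<\dim(X)$; (4) if $X$ is definable over a countable set $A$, $a\in X$ is generic over $A$, and $B\supseteq A$ is countable, then every neighborhood of $a$ contains a generic of $X$ over $B$; (5) if $X,Y$ and $Z\subset X\times Y$ are $A$-definable of the same dimension with both projections $Z\to X$, $Z\to Y$ finite-to-one, and $(x,y)\in Z$ is generic over $A$, then there are open neighborhoods $U\ni x$, $V\ni y$ such that $Z\cap(U\times V)$ is the graph of a homeomorphism $U\to V$. It is t-minimal if moreover there is a formula $\phi(x,\bar y)$ without parameters whose instances form a basis of $\tau$,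 and $R$ has no isolated points. A lore is a collection $\mathcal S$ of definable sets ("loric sets") such that: (i) $R$ and the diagonal of $R^2$ are loric, and loric sets are closed under finite products, finite intersections and coordinate permutations; (ii) if $f:X\to Y$ is a definable homeomorphism with $X$ and the graph of $f$ loric, then $Y$ is loric; (iii) every definable open subset of a loric set is loric, and a definable set admitting an open cover by loric sets is loric; (iv) every nonempty $A$-definable $X$ has a relatively open $A$-definable loric subset $X'$ with $\dim(X-X')<\dim(X)$. A loric map is a continuous function with loric graph; a loric homeomorphism is a loric map which is a homeomorphism. *)

theory Defs
  imports "HOL-Analysis.Abstract_Topology"
begin

datatype 'a trm = Var nat | Par 'a

datatype ('r, 'a) fm =
    Eq "'a trm" "'a trm"
  | Rel 'r "'a trm list"
  | Neg "('r, 'a) fm"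
  | Conj "('r, 'a) fm" "('r, 'a) fm"
  | Ex nat "('r, 'a) fm"

fun tval :: "(nat \<Rightarrow> 'a) \<Rightarrow> 'a trm \<Rightarrow> 'a" where
  "tval e (Var i) = e i"
| "tval e (Par a) = a"

text \<open>A structure with universe UNIV :: 'a set, interpretation I of relation symbols.\<close>
fun sat :: "('r \<Rightarrow> 'a list \<Rightarrow> bool) \<Rightarrow> (nat \<Rightarrow> 'a) \<Rightarrow> ('r, 'a) fm \<Rightarrow> bool" where
  "sat I e (Eq s t) = (tval e s = tval e t)"
| "sat I e (Rel R ts) = I R (map (tval e) ts)"
| "sat I e (Neg \<phi>) = (\<not> sat I e \<phi>)"
| "sat I e (Conj \<phi> \<psi>) = (sat I e \<phi> \<and> sat I e \<psi>)"
| "sat I e (Ex i \<phi>) = (\<exists>a. sat I (e(i := a)) \<phi>)"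

fun tfv :: "'a trm \<Rightarrow> nat set" where
  "tfv (Var i) = {i}"
| "tfv (Par a) = {}"

fun tpars :: "'a trm \<Rightarrow> 'a set" where
  "tpars (Var i) = {}"
| "tpars (Par a) = {a}"

fun fv :: "('r, 'a) fm \<Rightarrow> nat set" where
  "fv (Eq s t) = tfv s \<union> tfv t"
| "fv (Rel R ts) = (\<Union>t\<in>set ts. tfv t)"
| "fv (Neg \<phi>) = fv \<phi>"
| "fv (Conj \<phi> \<psi>) = fv \<phi> \<union> fv \<psi>"
| "fv (Ex i \<phi>) = fv \<phi> - {i}"

fun pars :: "('r, 'a) fm \<Rightarrow> 'a set" where
  "pars (Eq s t) = tpars s \<union> tpars t"
| "pars (Rel R ts) = (\<Union>t\<in>set ts. tpars t)"
| "pars (Neg \<phi>) = pars \<phi>"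
| "pars (Conj \<phi> \<psi>) = pars \<phi> \<union> pars \<psi>"
| "pars (Ex i \<phi>) = pars \<phi>"

definition env :: "'a list \<Rightarrow> nat \<Rightarrow> 'a" where
  "env xs i = (if i < length xs then xs ! i else undefined)"

text \<open>Subsets of R^n are sets of lists of length n.\<close>
definition tuples :: "nat \<Rightarrow> 'a list set" where
  "tuples n = {xs. length xs = n}"

definition defbl :: "('r \<Rightarrow> 'a list \<Rightarrow> bool) \<Rightarrow> 'a set \<Rightarrow> 'a list set \<Rightarrow> bool" where
  "defbl I A X \<longleftrightarrow> (\<exists>n (\<phi>::('r,'a) fm). pars \<phi> \<subseteq> A \<and> fv \<phi> \<subseteq> {..<n} \<and>
       X = {xs \<in> tuples n. sat I (env xs) \<phi>})"

definition definable :: "('r \<Rightarrow> 'a list \<Rightarrow> bool) \<Rightarrow> 'a list set \<Rightarrow> bool" where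
  "definable I X \<longleftrightarrow> defbl I UNIV X"

definition acl :: "('r \<Rightarrow> 'a list \<Rightarrow> bool) \<Rightarrow> 'a set \<Rightarrow> 'a set" where
  "acl I A = {b. \<exists>X. defbl I A X \<and> X \<subseteq> tuples 1 \<and> finite X \<and> [b] \<in> X}"

definition acl_indep :: "('r \<Rightarrow> 'a list \<Rightarrow> bool) \<Rightarrow> 'a set \<Rightarrow> 'a set \<Rightarrow> bool" where
  "acl_indep I A B \<longleftrightarrow> (\<forall>b\<in>B. b \<notin> acl I (A \<union> (B - {b})))"

definition dim_tp :: "('r \<Rightarrow> 'a list \<Rightarrow> bool) \<Rightarrow> 'a list \<Rightarrow> 'a set \<Rightarrow> int" where
  "dim_tp I a A = int (Max {card B | B. B \<subseteq> set a \<and> acl_indep I A B})"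

definition dim_over :: "('r \<Rightarrow> 'a list \<Rightarrow> bool) \<Rightarrow> 'a list set \<Rightarrow> 'a set \<Rightarrow> int" where
  "dim_over I X A = (if X = {} then -1 else Max ((\<lambda>a. dim_tp I a A) ` X))"

text \<open>dim(X) for definable X, computed over a finite parameter set defining X
  (independent of the choice in an aleph_1-saturated geometric structure).\<close>
definition dim :: "('r \<Rightarrow> 'a list \<Rightarrow> bool) \<Rightarrow> 'a list set \<Rightarrow> int" where
  "dim I X = dim_over I X (SOME A. finite A \<and> defbl I A X)"

definition acl_exchange :: "('r \<Rightarrow> 'a list \<Rightarrow> bool) \<Rightarrow> bool" where
  "acl_exchange I \<longleftrightarrow> (\<forall>A b c. b \<in> acl I (insert c A) \<and> b \<notin> acl I A \<longrightarrow> c \<in> acl I (insert b A))"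

text \<open>Uniform finiteness (elimination of the quantifier "there exist infinitely many").\<close>
definition elim_ex_inf :: "('r \<Rightarrow> 'a list \<Rightarrow> bool) \<Rightarrow> bool" where
  "elim_ex_inf I \<longleftrightarrow> (\<forall>(\<phi>::('r,'a) fm) k. pars \<phi> = {} \<and> fv \<phi> \<subseteq> {..<Suc k} \<longrightarrow>
      (\<exists>N::nat. \<forall>bs. length bs = k \<and> finite {a. sat I (env (a # bs)) \<phi>} \<longrightarrow>
          card {a. sat I (env (a # bs)) \<phi>} \<le> N))"

definition aleph1_saturated :: "('r \<Rightarrow> 'a list \<Rightarrow> bool) \<Rightarrow> bool" where
  "aleph1_saturated I \<longleftrightarrow> (\<forall>A (\<Phi>::('r,'a) fm set). countable A \<and>
      (\<forall>\<phi>\<in>\<Phi>. pars \<phi> \<subseteq> A \<and> fv \<phi> \<subseteq> {0}) \<and>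
      (\<forall>\<Phi>0. finite \<Phi>0 \<and> \<Phi>0 \<subseteq> \<Phi> \<longrightarrow> (\<exists>a. \<forall>\<phi>\<in>\<Phi>0. sat I (env [a]) \<phi>)) \<longrightarrow>
      (\<exists>a. \<forall>\<phi>\<in>\<Phi>. sat I (env [a]) \<phi>))"

definition geometric :: "('r \<Rightarrow> 'a list \<Rightarrow> bool) \<Rightarrow> bool" where
  "geometric I \<longleftrightarrow> acl_exchange I \<and> elim_ex_inf I"

definition box :: "'a set list \<Rightarrow> 'a list set" where
  "box Os = {ys. length ys = length Os \<and> (\<forall>i<length Os. ys ! i \<in> Os ! i)}"

text \<open>Open sets of the disjoint union of all R^n with the product topologies.\<close>
definition lopen :: "'a topology \<Rightarrow> 'a list set \<Rightarrow> bool" where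
  "lopen \<tau> U \<longleftrightarrow> (\<forall>xs\<in>U. \<exists>Os. length Os = length xs \<and> (\<forall>i<length Os. openin \<tau> (Os ! i))
        \<and> xs \<in> box Os \<and> box Os \<subseteq> U)"

definition ropen :: "'a topology \<Rightarrow> 'a list set \<Rightarrow> 'a list set \<Rightarrow> bool" where
  "ropen \<tau> X V \<longleftrightarrow> (\<exists>U. lopen \<tau> U \<and> V = U \<inter> X)"

definition lclosure :: "'a topology \<Rightarrow> 'a list set \<Rightarrow> 'a list set" where
  "lclosure \<tau> S = {a. \<forall>U. lopen \<tau> U \<and> a \<in> U \<longrightarrow> U \<inter> S \<noteq> {}}"

definition lcont :: "'a topology \<Rightarrow> 'a list set \<Rightarrow> ('a list \<Rightarrow> 'a list) \<Rightarrow> bool" where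
  "lcont \<tau> X f \<longleftrightarrow> (\<forall>V. lopen \<tau> V \<longrightarrow> ropen \<tau> X {x \<in> X. f x \<in> V})"

definition lhomeo :: "'a topology \<Rightarrow> 'a list set \<Rightarrow> 'a list set \<Rightarrow> ('a list \<Rightarrow> 'a list) \<Rightarrow> bool" where
  "lhomeo \<tau> X Y f \<longleftrightarrow> bij_betw f X Y \<and> lcont \<tau> X f \<and> lcont \<tau> Y (the_inv_into X f)"

definition graph :: "'a list set \<Rightarrow> ('a list \<Rightarrow> 'a list) \<Rightarrow> 'a list set" where
  "graph X f = {x @ f x | x. x \<in> X}"

definition lprod :: "'a list set \<Rightarrow> 'a list set \<Rightarrow> 'a list set" where
  "lprod X Y = {x @ y | x y. x \<in> X \<and> y \<in> Y}"

definition hausdorff_geometric ::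
  "('r \<Rightarrow> 'a list \<Rightarrow> bool) \<Rightarrow> 'a topology \<Rightarrow> bool" where
  "hausdorff_geometric I \<tau> \<longleftrightarrow>
     topspace \<tau> = UNIV \<and>
     \<comment> \<open>(1) Hausdorff\<close>
     (\<forall>a b. a \<noteq> b \<longrightarrow> (\<exists>U V. openin \<tau> U \<and> openin \<tau> V \<and> a \<in> U \<and> b \<in> V \<and> U \<inter> V = {})) \<and>
     \<comment> \<open>(2) geometric and aleph_1-saturated\<close>
     geometric I \<and> aleph1_saturated I \<and>
     \<comment> \<open>(3) frontier condition\<close>
     (\<forall>A X n a. countable A \<and> defbl I A X \<and> X \<subseteq> tuples n \<and>
         a \<in> lclosure \<tau> (lclosure \<tau> X - X) \<longrightarrow> dim_tp I a A < dim I X) \<and>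
     \<comment> \<open>(4) generics are dense near generics\<close>
     (\<forall>A B X a U. countable A \<and> countable B \<and> A \<subseteq> B \<and> defbl I A X \<and>
         a \<in> X \<and> dim_tp I a A = dim I X \<and> lopen \<tau> U \<and> a \<in> U \<longrightarrow>
         (\<exists>b\<in>U \<inter> X. dim_tp I b B = dim I X)) \<and>
     \<comment> \<open>(5) generic local homeomorphism for finite-to-one correspondences\<close>
     (\<forall>A X Y Z n m x y. countable A \<and> X \<subseteq> tuples n \<and> Y \<subseteq> tuples m \<and>
         defbl I A X \<and> defbl I A Y \<and> defbl I A Z \<and> Z \<subseteq> lprod X Y \<and>
         dim I X = dim I Z \<and> dim I Y = dim I Z \<and>
         (\<forall>u\<in>X. finite {v \<in> Y. u @ v \<in> Z}) \<and> (\<forall>v\<in>Y. finite {u \<in> X. u @ v \<in> Z}) \<and>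
         x @ y \<in> Z \<and> x \<in> X \<and> y \<in> Y \<and> dim_tp I (x @ y) A = dim I Z \<longrightarrow>
         (\<exists>U V h. ropen \<tau> X U \<and> x \<in> U \<and> ropen \<tau> Y V \<and> y \<in> V \<and>
             lhomeo \<tau> U V h \<and> Z \<inter> lprod U V = graph U h))"

definition t_minimal :: "('r \<Rightarrow> 'a list \<Rightarrow> bool) \<Rightarrow> 'a topology \<Rightarrow> bool" where
  "t_minimal I \<tau> \<longleftrightarrow> hausdorff_geometric I \<tau> \<and>
     (\<exists>(\<phi>::('r,'a) fm) k. pars \<phi> = {} \<and> fv \<phi> \<subseteq> {..<Suc k} \<and>
        (\<forall>bs. length bs = k \<longrightarrow> openin \<tau> {a. sat I (env (a # bs)) \<phi>}) \<and>
        (\<forall>U a. openin \<tau> U \<and> a \<in> U \<longrightarrow>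
           (\<exists>bs. length bs = k \<and> a \<in> {c. sat I (env (c # bs)) \<phi>} \<and> {c. sat I (env (c # bs)) \<phi>} \<subseteq> U))) \<and>
     (\<forall>a. \<not> openin \<tau> {a})"

definition lore :: "('r \<Rightarrow> 'a list \<Rightarrow> bool) \<Rightarrow> 'a topology \<Rightarrow> 'a list set set \<Rightarrow> bool" where
  "lore I \<tau> S \<longleftrightarrow>
     (\<forall>X\<in>S. definable I X) \<and>
     \<comment> \<open>(i)\<close>
     {[a] | a. True} \<in> S \<and> {[a, a] | a. True} \<in> S \<and>
     (\<forall>X Y. X \<in> S \<and> Y \<in> S \<longrightarrow> lprod X Y \<in> S) \<and>
     (\<forall>X Y. X \<in> S \<and> Y \<in> S \<longrightarrow> X \<inter> Y \<in> S) \<and>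
     (\<forall>X n p. X \<in> S \<and> X \<subseteq> tuples n \<and> bij_betw p {..<n} {..<n} \<longrightarrow>
         (\<lambda>xs. map (\<lambda>i. xs ! p i) [0..<n]) ` X \<in> S) \<and>
     \<comment> \<open>(ii)\<close>
     (\<forall>X Y f. X \<in> S \<and> graph X f \<in> S \<and> definable I Y \<and> lhomeo \<tau> X Y f \<longrightarrow> Y \<in> S) \<and>
     \<comment> \<open>(iii)\<close>
     (\<forall>X V. X \<in> S \<and> definable I V \<and> V \<subseteq> X \<and> ropen \<tau> X V \<longrightarrow> V \<in> S) \<and>
     (\<forall>X. definable I X \<and> (\<forall>x\<in>X. \<exists>V\<in>S. V \<subseteq> X \<and> ropen \<tau> X V \<and> x \<in> V) \<longrightarrow> X \<in> S) \<and>
     \<comment> \<open>(iv)\<close>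
     (\<forall>A X. countable A \<and> defbl I A X \<and> X \<noteq> {} \<longrightarrow>
         (\<exists>X'. X' \<subseteq> X \<and> ropen \<tau> X X' \<and> defbl I A X' \<and> X' \<in> S \<and> dim I (X - X') < dim I X))"

definition loric_homeo ::
  "'a topology \<Rightarrow> 'a list set set \<Rightarrow> 'a list set \<Rightarrow> 'a list set \<Rightarrow> ('a list \<Rightarrow> 'a list) \<Rightarrow> bool" where
  "loric_homeo \<tau> S U V f \<longleftrightarrow> lhomeo \<tau> U V f \<and> graph U f \<in> S"

end

theory Submission
  imports Defs
begin

text \<open>
  The coordinates of f(u) are algebraic over u, so the graph Z of f has the dimension of X
  (and of Y), and (x, f(x)) is generic in Z. As f has finite fibres, the correspondence axiom
  (5) applies to Z and makes f a homeomorphism between neighbourhoods of x and f(x). By the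
  lore axiom (iv), Z has a loric relatively open part Z' whose complement has smaller
  dimension, so the generic point (x, f(x)) lies in Z'. Shrinking the homeomorphism to a
  definable product neighbourhood of (x, f(x)), available by t-minimality, turns its graph
  into a definable relatively open subset of Z', which is loric by (iii).
\<close>

section \<open>Manipulating formulas\<close>

lemma finite_tpars: "finite (tpars t)"
  by (cases t) auto

lemma finite_pars: "finite (pars \<phi>)"
  by (induction \<phi>) (auto simp: finite_tpars)

lemma finite_tfv: "finite (tfv t)"
  by (cases t) auto

lemma tval_cong: "(\<forall>i\<in>tfv t. e i = e' i) \<Longrightarrow> tval e t = tval e' t"
  by (cases t) auto

lemma sat_cong: "(\<forall>i\<in>fv \<phi>. e i = e' i) \<Longrightarrow> sat I e \<phi> = sat I e' \<phi>"
proof (induction \<phi> arbitrary: e e')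
  case (Eq s t)
  then show ?case using tval_cong[of s e e'] tval_cong[of t e e'] by auto
next
  case (Rel R ts)
  have "\<forall>t\<in>set ts. tval e t = tval e' t"
    using Rel.prems by (auto intro!: tval_cong)
  then have "map (tval e) ts = map (tval e') ts" by (metis map_eq_conv)
  then show ?case by (simp only: sat.simps)
next
  case (Conj \<phi>1 \<phi>2)
  then have "sat I e \<phi>1 = sat I e' \<phi>1" "sat I e \<phi>2 = sat I e' \<phi>2" by auto
  then show ?case by simp
next
  case (Ex i \<phi>)
  then have "\<And>a. sat I (e(i := a)) \<phi> = sat I (e'(i := a)) \<phi>"
    by (intro Ex.IH) auto
  then show ?case by simp
qed auto

fun tren :: "(nat \<Rightarrow> nat) \<Rightarrow> 'a trm \<Rightarrow> 'a trm" where
  "tren \<rho> (Var i) = Var (\<rho> i)"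
| "tren \<rho> (Par a) = Par a"

fun ren :: "(nat \<Rightarrow> nat) \<Rightarrow> ('r, 'a) fm \<Rightarrow> ('r, 'a) fm" where
  "ren \<rho> (Eq s t) = Eq (tren \<rho> s) (tren \<rho> t)"
| "ren \<rho> (Rel R ts) = Rel R (map (tren \<rho>) ts)"
| "ren \<rho> (Neg \<phi>) = Neg (ren \<rho> \<phi>)"
| "ren \<rho> (Conj \<phi> \<psi>) = Conj (ren \<rho> \<phi>) (ren \<rho> \<psi>)"
| "ren \<rho> (Ex i \<phi>) = Ex (\<rho> i) (ren \<rho> \<phi>)"

lemma tval_tren: "tval e (tren \<rho> t) = tval (e \<circ> \<rho>) t"
  by (cases t) auto

lemma sat_ren: "inj \<rho> \<Longrightarrow> sat I e (ren \<rho> \<phi>) = sat I (e \<circ> \<rho>) \<phi>"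
proof (induction \<phi> arbitrary: e)
  case (Ex i \<phi>)
  have "\<And>a. (e(\<rho> i := a)) \<circ> \<rho> = (e \<circ> \<rho>)(i := a)"
    using Ex.prems by (auto simp: fun_eq_iff inj_eq)
  then show ?case using Ex.IH[OF Ex.prems] by (simp only: ren.simps sat.simps)
qed (auto simp: tval_tren comp_def)

lemma tpars_tren: "tpars (tren \<rho> t) = tpars t"
  by (cases t) auto

lemma pars_ren: "pars (ren \<rho> \<phi>) = pars \<phi>"
  by (induction \<phi>) (auto simp: tpars_tren)

lemma tfv_tren: "tfv (tren \<rho> t) = \<rho> ` tfv t"
  by (cases t) auto

lemma fv_ren: "inj \<rho> \<Longrightarrow> fv (ren \<rho> \<phi>) = \<rho> ` fv \<phi>"
  by (induction \<phi>) (auto simp: tfv_tren image_set_diff image_Union inj_eq)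

fun tsub :: "(nat \<Rightarrow> 'a option) \<Rightarrow> 'a trm \<Rightarrow> 'a trm" where
  "tsub \<sigma> (Var i) = (case \<sigma> i of Some a \<Rightarrow> Par a | None \<Rightarrow> Var i)"
| "tsub \<sigma> (Par a) = Par a"

fun psub :: "(nat \<Rightarrow> 'a option) \<Rightarrow> ('r, 'a) fm \<Rightarrow> ('r, 'a) fm" where
  "psub \<sigma> (Eq s t) = Eq (tsub \<sigma> s) (tsub \<sigma> t)"
| "psub \<sigma> (Rel R ts) = Rel R (map (tsub \<sigma>) ts)"
| "psub \<sigma> (Neg \<phi>) = Neg (psub \<sigma> \<phi>)"
| "psub \<sigma> (Conj \<phi> \<psi>) = Conj (psub \<sigma> \<phi>) (psub \<sigma> \<psi>)"
| "psub \<sigma> (Ex i \<phi>) = Ex i (psub (\<sigma>(i := None)) \<phi>)"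

definition upd_env :: "(nat \<Rightarrow> 'a) \<Rightarrow> (nat \<Rightarrow> 'a option) \<Rightarrow> nat \<Rightarrow> 'a" where
  "upd_env e \<sigma> i = (case \<sigma> i of Some a \<Rightarrow> a | None \<Rightarrow> e i)"

lemma sat_psub: "sat I e (psub \<sigma> \<phi>) = sat I (upd_env e \<sigma>) \<phi>"
proof (induction \<phi> arbitrary: e \<sigma>)
  case (Ex i \<phi>)
  have "\<And>a. upd_env (e(i := a)) (\<sigma>(i := None)) = (upd_env e \<sigma>)(i := a)"
    by (auto simp: fun_eq_iff upd_env_def split: option.splits)
  then show ?case by (simp only: psub.simps sat.simps Ex.IH)
next
  case (Eq s t)
  have "tval e (tsub \<sigma> u) = tval (upd_env e \<sigma>) u" for u
    by (cases u) (auto simp: upd_env_def split: option.splits)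
  then show ?case by simp
next
  case (Rel R ts)
  have "tval e (tsub \<sigma> u) = tval (upd_env e \<sigma>) u" for u
    by (cases u) (auto simp: upd_env_def split: option.splits)
  then show ?case by (simp add: comp_def)
qed auto

lemma tfv_tsub: "tfv (tsub \<sigma> t) \<subseteq> tfv t - {i. \<sigma> i \<noteq> None}"
  by (cases t) (auto split: option.splits)

lemma fv_psub: "fv (psub \<sigma> \<phi>) \<subseteq> fv \<phi> - {i. \<sigma> i \<noteq> None}"
proof (induction \<phi> arbitrary: \<sigma>)
  case (Eq s t)
  then show ?case using tfv_tsub[of \<sigma> s] tfv_tsub[of \<sigma> t] by auto
next
  case (Rel R ts)
  then show ?case using tfv_tsub[of \<sigma>] by fastforce
next
  case (Conj \<phi>1 \<phi>2)
  show ?case using Conj.IH(1)[of \<sigma>] Conj.IH(2)[of \<sigma>] by auto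
next
  case (Ex i \<phi>)
  have "fv (psub (\<sigma>(i := None)) \<phi>) \<subseteq> fv \<phi> - {j. (\<sigma>(i := None)) j \<noteq> None}" by (rule Ex.IH)
  then show ?case by auto
qed auto

lemma tpars_tsub: "tpars (tsub \<sigma> t) \<subseteq> tpars t \<union> {a. \<exists>i. \<sigma> i = Some a}"
  by (cases t) (auto split: option.splits)

lemma pars_psub: "pars (psub \<sigma> \<phi>) \<subseteq> pars \<phi> \<union> {a. \<exists>i. \<sigma> i = Some a}"
proof (induction \<phi> arbitrary: \<sigma>)
  case (Eq s t)
  then show ?case using tpars_tsub[of \<sigma> s] tpars_tsub[of \<sigma> t] by auto
next
  case (Rel R ts)
  then show ?case using tpars_tsub[of \<sigma>] by fastforce
next
  case (Conj \<phi>1 \<phi>2)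
  show ?case using Conj.IH(1)[of \<sigma>] Conj.IH(2)[of \<sigma>] by auto
next
  case (Ex i \<phi>)
  have "pars (psub (\<sigma>(i := None)) \<phi>) \<subseteq> pars \<phi> \<union> {a. \<exists>j. (\<sigma>(i := None)) j = Some a}" by (rule Ex.IH)
  then show ?case by (auto split: if_splits)
qed auto

fun exs :: "nat list \<Rightarrow> ('r, 'a) fm \<Rightarrow> ('r, 'a) fm" where
  "exs [] \<phi> = \<phi>"
| "exs (v # vs) \<phi> = Ex v (exs vs \<phi>)"

lemma sat_exs: "sat I e (exs vs \<phi>) = (\<exists>g. sat I (\<lambda>i. if i \<in> set vs then g i else e i) \<phi>)"
proof (induction vs arbitrary: e)
  case (Cons v vs)
  show ?case
  proof
    assume "sat I e (exs (v # vs) \<phi>)"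
    then obtain a g where "sat I (\<lambda>i. if i \<in> set vs then g i else (e(v := a)) i) \<phi>"
      using Cons by auto
    moreover have "(\<lambda>i. if i \<in> set vs then g i else (e(v := a)) i)
        = (\<lambda>i. if i \<in> set (v # vs) then (if i \<in> set vs then g i else a) else e i)"
      by (auto simp: fun_eq_iff)
    ultimately show "\<exists>g. sat I (\<lambda>i. if i \<in> set (v # vs) then g i else e i) \<phi>"
      by metis
  next
    assume "\<exists>g. sat I (\<lambda>i. if i \<in> set (v # vs) then g i else e i) \<phi>"
    then obtain g where "sat I (\<lambda>i. if i \<in> set (v # vs) then g i else e i) \<phi>" by blast
    moreover have "(\<lambda>i. if i \<in> set (v # vs) then g i else e i)
        = (\<lambda>i. if i \<in> set vs then g i else (e(v := g v)) i)"
      by (auto simp: fun_eq_iff)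
    ultimately show "sat I e (exs (v # vs) \<phi>)" using Cons by auto
  qed
qed simp

lemma fv_exs: "fv (exs vs \<phi>) = fv \<phi> - set vs"
  by (induction vs) auto

lemma pars_exs: "pars (exs vs \<phi>) = pars \<phi>"
  by (induction vs) auto

lemma sat_exs_append:
  assumes fv: "fv \<phi> \<subseteq> {..<n + m}" and lu: "length u = n"
  shows "sat I (env u) (exs [n..<n + m] \<phi>) \<longleftrightarrow> (\<exists>v. length v = m \<and> sat I (env (u @ v)) \<phi>)"
proof
  assume "sat I (env u) (exs [n..<n + m] \<phi>)"
  then obtain g where g: "sat I (\<lambda>i. if i \<in> set [n..<n + m] then g i else env u i) \<phi>"
    by (auto simp: sat_exs)
  define v where "v = map (\<lambda>i. g (n + i)) [0..<m]"
  have "sat I (\<lambda>i. if i \<in> set [n..<n + m] then g i else env u i) \<phi> = sat I (env (u @ v)) \<phi>"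
    using fv lu by (intro sat_cong) (auto simp: env_def v_def nth_append)
  then have "sat I (env (u @ v)) \<phi>" using g by simp
  then show "\<exists>v. length v = m \<and> sat I (env (u @ v)) \<phi>"
    by (intro exI[of _ v]) (simp add: v_def)
next
  assume "\<exists>v. length v = m \<and> sat I (env (u @ v)) \<phi>"
  then obtain v where v: "length v = m" "sat I (env (u @ v)) \<phi>" by blast
  have "sat I (\<lambda>i. if i \<in> set [n..<n + m] then v ! (i - n) else env u i) \<phi> = sat I (env (u @ v)) \<phi>"
    using fv lu v(1) by (intro sat_cong) (auto simp: env_def nth_append)
  then show "sat I (env u) (exs [n..<n + m] \<phi>)"
    using v(2) by (auto simp: sat_exs)
qed

definition Truth :: "('r, 'a) fm" where
  "Truth = Ex 0 (Eq (Var 0) (Var 0))"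

lemma sat_Truth [simp]: "sat I e Truth"
  and fv_Truth [simp]: "fv Truth = {}"
  and pars_Truth [simp]: "pars Truth = {}"
  by (simp_all add: Truth_def)

fun Conjs :: "('r, 'a) fm list \<Rightarrow> ('r, 'a) fm" where
  "Conjs [] = Truth"
| "Conjs (\<phi> # l) = Conj \<phi> (Conjs l)"

lemma sat_Conjs: "sat I e (Conjs l) = (\<forall>\<phi>\<in>set l. sat I e \<phi>)"
  and fv_Conjs: "fv (Conjs l) = (\<Union>\<phi>\<in>set l. fv \<phi>)"
  and pars_Conjs: "pars (Conjs l) = (\<Union>\<phi>\<in>set l. pars \<phi>)"
  by (induction l) auto

fun vars :: "('r, 'a) fm \<Rightarrow> nat set" where
  "vars (Eq s t) = tfv s \<union> tfv t"
| "vars (Rel R ts) = (\<Union>t\<in>set ts. tfv t)"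
| "vars (Neg \<phi>) = vars \<phi>"
| "vars (Conj \<phi> \<psi>) = vars \<phi> \<union> vars \<psi>"
| "vars (Ex i \<phi>) = insert i (vars \<phi>)"

lemma finite_vars: "finite (vars \<phi>)"
  by (induction \<phi>) (auto simp: finite_tfv)

lemma fv_subset_vars: "fv \<phi> \<subseteq> vars \<phi>"
  by (induction \<phi>) auto

definition fresh :: "('r, 'a) fm \<Rightarrow> nat \<Rightarrow> nat" where
  "fresh \<phi> k = Suc (Max (insert k (vars \<phi>)))"

lemma fresh_gt: "i \<in> vars \<phi> \<Longrightarrow> i < fresh \<phi> k" "k < fresh \<phi> k"
  unfolding fresh_def using finite_vars[of \<phi>] by (auto simp: le_imp_less_Suc)

definition assign_var :: "nat \<Rightarrow> nat \<Rightarrow> ('r, 'a) fm \<Rightarrow> ('r, 'a) fm" where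
  "assign_var k j \<phi> = Ex k (Conj (Eq (Var k) (Var j)) \<phi>)"

lemma sat_assign_var: "j \<noteq> k \<Longrightarrow> sat I e (assign_var k j \<phi>) = sat I (e(k := e j)) \<phi>"
  by (auto simp: assign_var_def)

lemma fv_assign_var: "fv (assign_var k j \<phi>) \<subseteq> insert j (fv \<phi> - {k})"
  by (auto simp: assign_var_def)

lemma pars_assign_var: "pars (assign_var k j \<phi>) = pars \<phi>"
  by (auto simp: assign_var_def)

text \<open>The \<open>M\<close> witnesses are kept in variables above all variables of \<open>\<chi>\<close>, so they cannot clash.\<close>

definition at_least :: "nat \<Rightarrow> ('r, 'a) fm \<Rightarrow> nat \<Rightarrow> ('r, 'a) fm" where
  "at_least M \<chi> k = exs [fresh \<chi> k..<fresh \<chi> k + M]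
     (Conj (Conjs [Neg (Eq (Var (fresh \<chi> k + s)) (Var (fresh \<chi> k + t))). s \<leftarrow> [0..<M], t \<leftarrow> [0..<M], s \<noteq> t])
           (Conjs [assign_var k (fresh \<chi> k + t) \<chi>. t \<leftarrow> [0..<M]]))"

lemma fv_at_least: "fv (at_least M \<chi> k) \<subseteq> fv \<chi> - {k}"
proof -
  have "fv (assign_var k (fresh \<chi> k + t) \<chi>) \<subseteq> insert (fresh \<chi> k + t) (fv \<chi> - {k})" for t
    by (rule fv_assign_var)
  then show ?thesis
    unfolding at_least_def fv_exs by (fastforce simp: fv_Conjs)
qed

lemma pars_at_least: "pars (at_least M \<chi> k) \<subseteq> pars \<chi>"
  unfolding at_least_def pars_exs by (auto simp: pars_Conjs pars_assign_var)

lemma sat_at_least: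
  "sat I e (at_least M \<chi> k) = (\<exists>S. finite S \<and> card S = M \<and> (\<forall>a\<in>S. sat I (e(k := a)) \<chi>))"
proof -
  let ?K = "fresh \<chi> k"
  have Kgt: "\<And>i. i \<in> fv \<chi> \<Longrightarrow> i < ?K" using fresh_gt(1) fv_subset_vars by blast
  have kK: "k < ?K" by (rule fresh_gt(2))
  have body: "sat I (\<lambda>i. if i \<in> set [?K..<?K + M] then g i else e i)
      (Conj (Conjs [Neg (Eq (Var (?K + s)) (Var (?K + t))). s \<leftarrow> [0..<M], t \<leftarrow> [0..<M], s \<noteq> t])
            (Conjs [assign_var k (?K + t) \<chi>. t \<leftarrow> [0..<M]]))
    \<longleftrightarrow> (\<forall>s<M. \<forall>t<M. s \<noteq> t \<longrightarrow> g (?K + s) \<noteq> g (?K + t)) \<and> (\<forall>t<M. sat I (e(k := g (?K + t))) \<chi>)"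
    for g
  proof -
    let ?e = "\<lambda>i. if i \<in> set [?K..<?K + M] then g i else e i"
    have "sat I ?e (assign_var k (?K + t) \<chi>) = sat I (?e(k := ?e (?K + t))) \<chi>" for t
      using kK by (intro sat_assign_var) auto
    moreover have "sat I (?e(k := ?e (?K + t))) \<chi> = sat I (e(k := g (?K + t))) \<chi>" if "t < M" for t
      using Kgt kK that by (intro sat_cong) fastforce
    ultimately show ?thesis by (auto simp: sat_Conjs)
  qed
  have "sat I e (at_least M \<chi> k) \<longleftrightarrow>
      (\<exists>g. (\<forall>s<M. \<forall>t<M. s \<noteq> t \<longrightarrow> g (?K + s) \<noteq> g (?K + t)) \<and> (\<forall>t<M. sat I (e(k := g (?K + t))) \<chi>))"
    unfolding at_least_def sat_exs body ..
  also have "\<dots> \<longleftrightarrow> (\<exists>S. finite S \<and> card S = M \<and> (\<forall>a\<in>S. sat I (e(k := a)) \<chi>))"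
  proof
    assume "\<exists>g. (\<forall>s<M. \<forall>t<M. s \<noteq> t \<longrightarrow> g (?K + s) \<noteq> g (?K + t)) \<and> (\<forall>t<M. sat I (e(k := g (?K + t))) \<chi>)"
    then obtain g where g1: "\<forall>s<M. \<forall>t<M. s \<noteq> t \<longrightarrow> g (?K + s) \<noteq> g (?K + t)"
      and g2: "\<forall>t<M. sat I (e(k := g (?K + t))) \<chi>" by blast
    have "inj_on (\<lambda>t. g (?K + t)) {..<M}" using g1 by (auto simp: inj_on_def)
    then have "card ((\<lambda>t. g (?K + t)) ` {..<M}) = M" by (simp add: card_image)
    then show "\<exists>S. finite S \<and> card S = M \<and> (\<forall>a\<in>S. sat I (e(k := a)) \<chi>)"
      using g2 by (intro exI[of _ "(\<lambda>t. g (?K + t)) ` {..<M}"]) auto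
  next
    assume "\<exists>S. finite S \<and> card S = M \<and> (\<forall>a\<in>S. sat I (e(k := a)) \<chi>)"
    then obtain S where S: "finite S" "card S = M" "\<forall>a\<in>S. sat I (e(k := a)) \<chi>" by blast
    obtain xs where xs: "distinct xs" "set xs = S" using finite_distinct_list[OF S(1)] by blast
    have "length xs = M" using xs S(2) distinct_card by fastforce
    then show "\<exists>g. (\<forall>s<M. \<forall>t<M. s \<noteq> t \<longrightarrow> g (?K + s) \<noteq> g (?K + t)) \<and> (\<forall>t<M. sat I (e(k := g (?K + t))) \<chi>)"
      using xs S(3) by (intro exI[of _ "\<lambda>i. xs ! (i - ?K)"]) (auto simp: nth_eq_iff_index_eq)
  qed
  finally show ?thesis .
qed

lemma finite_if_not_at_least:
  assumes "\<not> sat I e (at_least (Suc N) \<chi> k)"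
  shows "finite {a. sat I (e(k := a)) \<chi>}"
proof (rule ccontr)
  assume "infinite {a. sat I (e(k := a)) \<chi>}"
  then obtain S where "S \<subseteq> {a. sat I (e(k := a)) \<chi>}" "finite S" "card S = Suc N"
    using infinite_arbitrarily_large by blast
  then show False using assms by (auto simp: sat_at_least)
qed

lemma card_ge_if_at_least:
  assumes "sat I e (at_least M \<chi> k)" "finite {a. sat I (e(k := a)) \<chi>}"
  shows "M \<le> card {a. sat I (e(k := a)) \<chi>}"
proof -
  obtain S where "finite S" "card S = M" "\<forall>a\<in>S. sat I (e(k := a)) \<chi>"
    using assms(1) by (auto simp: sat_at_least)
  then show ?thesis using assms(2) card_mono[of _ S] by (metis mem_Collect_eq subsetI)
qed

fun tabstract_par :: "'a \<Rightarrow> nat \<Rightarrow> 'a trm \<Rightarrow> 'a trm" where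
  "tabstract_par d j (Var i) = Var i"
| "tabstract_par d j (Par a) = (if a = d then Var j else Par a)"

fun abstract_par :: "'a \<Rightarrow> nat \<Rightarrow> ('r, 'a) fm \<Rightarrow> ('r, 'a) fm" where
  "abstract_par d j (Eq s t) = Eq (tabstract_par d j s) (tabstract_par d j t)"
| "abstract_par d j (Rel R ts) = Rel R (map (tabstract_par d j) ts)"
| "abstract_par d j (Neg \<phi>) = Neg (abstract_par d j \<phi>)"
| "abstract_par d j (Conj \<phi> \<psi>) = Conj (abstract_par d j \<phi>) (abstract_par d j \<psi>)"
| "abstract_par d j (Ex i \<phi>) = Ex i (abstract_par d j \<phi>)"

lemma sat_abstract_par:
  "j \<notin> vars \<phi> \<Longrightarrow> e j = d \<Longrightarrow> sat I e (abstract_par d j \<phi>) = sat I e \<phi>"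
proof (induction \<phi> arbitrary: e)
  case (Rel R ts)
  have "tval e (tabstract_par d j t) = tval e t" for t
    using Rel.prems(2) by (cases t) auto
  then show ?case by (simp add: comp_def)
next
  case (Ex i \<phi>)
  then have "\<And>a. sat I (e(i := a)) (abstract_par d j \<phi>) = sat I (e(i := a)) \<phi>"
    by (intro Ex.IH) auto
  then show ?case by simp
next
  case (Eq s t)
  then show ?case by (cases s; cases t) auto
qed auto

lemma pars_abstract_par: "pars (abstract_par d j \<phi>) \<subseteq> pars \<phi> - {d}"
proof (induction \<phi>)
  case (Eq s t)
  then show ?case by (cases s; cases t) auto
next
  case (Rel R ts)
  have "tpars (tabstract_par d j t) \<subseteq> tpars t - {d}" for t by (cases t) auto
  then show ?case by fastforce
qed auto

lemma fv_abstract_par: "fv (abstract_par d j \<phi>) \<subseteq> insert j (fv \<phi>)"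
proof (induction \<phi>)
  case (Eq s t)
  then show ?case by (cases s; cases t) auto
next
  case (Rel R ts)
  have "tfv (tabstract_par d j t) \<subseteq> insert j (tfv t)" for t by (cases t) auto
  then show ?case by fastforce
qed auto

text \<open>
  \<open>inst_prefix p \<phi>\<close> substitutes the parameters \<open>p\<close> for the first \<open>length p\<close> variables of
  \<open>\<phi>\<close> and moves the variable \<open>length p\<close> to position \<open>0\<close>.
\<close>

definition prefix_pars :: "'a list \<Rightarrow> nat \<Rightarrow> 'a option" where
  "prefix_pars p i = (if 1 \<le> i \<and> i \<le> length p then Some (p ! (i - 1)) else None)"

definition inst_prefix :: "'a list \<Rightarrow> ('r, 'a) fm \<Rightarrow> ('r, 'a) fm" where
  "inst_prefix p \<phi> = assign_var (Suc (length p)) 0 (psub (prefix_pars p) (ren Suc \<phi>))"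

lemma sat_inst_prefix: "sat I (env [a]) (inst_prefix p \<phi>) = sat I (env (p @ [a])) \<phi>"
proof -
  let ?e = "(env [a])(Suc (length p) := a)"
  have "upd_env ?e (prefix_pars p) \<circ> Suc = env (p @ [a])"
  proof
    fix i
    show "(upd_env ?e (prefix_pars p) \<circ> Suc) i = env (p @ [a]) i"
      by (cases "i < length p"; cases "i = length p")
        (auto simp: upd_env_def prefix_pars_def env_def nth_append)
  qed
  then show ?thesis
    by (simp add: inst_prefix_def sat_assign_var sat_psub sat_ren env_def)
qed

lemma fv_inst_prefix: "fv \<phi> \<subseteq> {..length p} \<Longrightarrow> fv (inst_prefix p \<phi>) \<subseteq> {0}"
proof -
  assume \<phi>: "fv \<phi> \<subseteq> {..length p}"
  have "fv (psub (prefix_pars p) (ren Suc \<phi>)) \<subseteq> fv (ren Suc \<phi>) - {i. prefix_pars p i \<noteq> None}"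
    by (rule fv_psub)
  also have "\<dots> \<subseteq> {Suc (length p)}" using \<phi> by (auto simp: fv_ren prefix_pars_def)
  finally show ?thesis
    using fv_assign_var[of "Suc (length p)" 0] by (fastforce simp: inst_prefix_def)
qed

lemma pars_inst_prefix: "pars (inst_prefix p \<phi>) \<subseteq> pars \<phi> \<union> set p"
  using pars_psub[of "prefix_pars p" "ren Suc \<phi>"]
  by (auto simp: inst_prefix_def pars_assign_var pars_ren prefix_pars_def split: if_splits)

section \<open>Algebraic closure\<close>

lemma acl_iff: "b \<in> acl I A \<longleftrightarrow> (\<exists>\<theta>. pars \<theta> \<subseteq> A \<and> fv \<theta> \<subseteq> {0} \<and>
    finite {a. sat I (env [a]) \<theta>} \<and> sat I (env [b]) \<theta>)"
proof
  assume "b \<in> acl I A"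
  then obtain X where X: "defbl I A X" "X \<subseteq> tuples 1" "finite X" "[b] \<in> X"
    unfolding acl_def by blast
  then obtain n \<phi> where \<phi>: "pars \<phi> \<subseteq> A" "fv \<phi> \<subseteq> {..<n}" "X = {xs \<in> tuples n. sat I (env xs) \<phi>}"
    unfolding defbl_def by blast
  have n: "n = 1" using X(4) \<phi>(3) by (auto simp: tuples_def)
  have "{a. sat I (env [a]) \<phi>} = (\<lambda>a. [a]) -` X" using \<phi>(3) n by (auto simp: tuples_def)
  then have "finite {a. sat I (env [a]) \<phi>}" using X(3) by (metis finite_vimageI inj_def list.inject)
  then show "\<exists>\<theta>. pars \<theta> \<subseteq> A \<and> fv \<theta> \<subseteq> {0} \<and> finite {a. sat I (env [a]) \<theta>} \<and> sat I (env [b]) \<theta>"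
    using \<phi> n X(4) by (intro exI[of _ \<phi>]) auto
next
  assume "\<exists>\<theta>. pars \<theta> \<subseteq> A \<and> fv \<theta> \<subseteq> {0} \<and> finite {a. sat I (env [a]) \<theta>} \<and> sat I (env [b]) \<theta>"
  then obtain \<theta> where \<theta>: "pars \<theta> \<subseteq> A" "fv \<theta> \<subseteq> {0}" "finite {a. sat I (env [a]) \<theta>}" "sat I (env [b]) \<theta>"
    by blast
  define X where "X = {xs \<in> tuples 1. sat I (env xs) \<theta>}"
  have "defbl I A X" unfolding defbl_def X_def using \<theta> by (intro exI[of _ 1] exI[of _ \<theta>]) auto
  moreover have "X = (\<lambda>a. [a]) ` {a. sat I (env [a]) \<theta>}"
    unfolding X_def by (auto simp: tuples_def length_Suc_conv)
  ultimately show "b \<in> acl I A" unfolding acl_def using \<theta>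
    by (intro CollectI exI[of _ X]) (auto simp: X_def tuples_def)
qed

lemma acl_mono: "A \<subseteq> B \<Longrightarrow> acl I A \<subseteq> acl I B"
proof
  fix b assume "A \<subseteq> B" "b \<in> acl I A"
  then show "b \<in> acl I B" unfolding acl_iff by (meson order_trans)
qed

lemma acl_increasing: "A \<subseteq> acl I A"
proof
  fix a assume "a \<in> A"
  then show "a \<in> acl I A"
    unfolding acl_iff by (intro exI[of _ "Eq (Var 0) (Par a)"]) (auto simp: env_def)
qed

text \<open>
  Transitivity of \<open>acl\<close> needs no uniform finiteness: with \<open>N\<close> the number of solutions of
  \<open>\<phi>(-, d)\<close>, the formula \<open>\<Theta>(z) = \<exists>y. \<psi>(y) \<and> \<phi>(z, y) \<and> \<phi>(-, y) has at most N solutions\<close>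
  is over \<open>C\<close> and has finitely many solutions, one of which is \<open>b\<close>.
\<close>

lemma acl_insert_algebraic:
  fixes I :: "'r \<Rightarrow> 'a list \<Rightarrow> bool"
  assumes b: "b \<in> acl I (insert d C)" and d: "d \<in> acl I C"
  shows "b \<in> acl I C"
proof -
  obtain \<phi> where \<phi>: "pars \<phi> \<subseteq> insert d C" "fv \<phi> \<subseteq> {0}" "finite {a. sat I (env [a]) \<phi>}"
      "sat I (env [b]) \<phi>"
    using b unfolding acl_iff by blast
  obtain \<psi> where \<psi>: "pars \<psi> \<subseteq> C" "fv \<psi> \<subseteq> {0}" "finite {a. sat I (env [a]) \<psi>}" "sat I (env [d]) \<psi>"
    using d unfolding acl_iff by blast
  define j where "j = fresh \<phi> 0"
  have j: "j \<notin> vars \<phi>" "j \<noteq> 0"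
    using fresh_gt[where \<phi> = \<phi> and k = 0] unfolding j_def by fastforce+
  define \<phi>j where "\<phi>j = abstract_par d j \<phi>"
  define N where "N = card {a. sat I (env [a]) \<phi>}"
  define \<Theta> where "\<Theta> = Ex j (Conj (assign_var 0 j \<psi>) (Conj \<phi>j (Neg (at_least (Suc N) \<phi>j 0))))"
  have pars\<Theta>: "pars \<Theta> \<subseteq> C"
    using \<psi>(1) \<phi>(1) pars_abstract_par[of d j \<phi>] pars_at_least[of "Suc N" \<phi>j 0]
    unfolding \<Theta>_def \<phi>j_def by (auto simp: pars_assign_var)
  have fv\<Theta>: "fv \<Theta> \<subseteq> {0}"
    using \<psi>(2) \<phi>(2) fv_abstract_par[of d j \<phi>] fv_at_least[of "Suc N" \<phi>j 0] fv_assign_var[of 0 j \<psi>]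
    unfolding \<Theta>_def \<phi>j_def by auto
  have env_j: "(env [a])(j := y, 0 := c) = (env [c])(j := y)" for a y c :: 'a
    using j(2) by (auto simp: fun_eq_iff env_def)
  have sat_\<phi>j: "sat I ((env [c])(j := d)) \<phi>j = sat I (env [c]) \<phi>" for c
  proof -
    have "sat I ((env [c])(j := d)) \<phi>j = sat I ((env [c])(j := d)) \<phi>"
      unfolding \<phi>j_def by (rule sat_abstract_par[OF j(1)]) simp
    also have "\<dots> = sat I (env [c]) \<phi>" using \<phi>(2) j(2) by (intro sat_cong) auto
    finally show ?thesis .
  qed
  have sat_\<psi>: "sat I e (assign_var 0 j \<psi>) = sat I (env [e j]) \<psi>" for e
    using sat_assign_var[of j 0 I e \<psi>] j(2) \<psi>(2) by (auto intro!: sat_cong simp: env_def)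
  have "sat I (env [b]) \<Theta>"
  proof -
    let ?e = "(env [b])(j := d)"
    have "\<not> sat I ?e (at_least (Suc N) \<phi>j 0)"
    proof
      assume "sat I ?e (at_least (Suc N) \<phi>j 0)"
      then obtain S where S: "finite S" "card S = Suc N" "\<forall>a\<in>S. sat I (?e(0 := a)) \<phi>j"
        by (auto simp: sat_at_least)
      have "?e(0 := a) = (env [a])(j := d)" for a using env_j[of b d a] by simp
      then have "S \<subseteq> {a. sat I (env [a]) \<phi>}" using S(3) sat_\<phi>j by auto
      then have "card S \<le> N" unfolding N_def using \<phi>(3) card_mono by blast
      then show False using S(2) by simp
    qed
    then show ?thesis
      using sat_\<psi> \<psi>(4) sat_\<phi>j \<phi>(4) unfolding \<Theta>_def by (auto intro!: exI[of _ d])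
  qed
  moreover have "finite {a. sat I (env [a]) \<Theta>}"
  proof -
    define T where "T y = {c. sat I ((env [c])(j := y)) \<phi>j}" for y
    have "{a. sat I (env [a]) \<Theta>} \<subseteq> (\<Union>y\<in>{a. sat I (env [a]) \<psi>}. if finite (T y) then T y else {})"
    proof
      fix a assume "a \<in> {a. sat I (env [a]) \<Theta>}"
      then obtain y where y1: "sat I ((env [a])(j := y)) (assign_var 0 j \<psi>)"
        and y2: "sat I ((env [a])(j := y)) \<phi>j"
        and y3: "\<not> sat I ((env [a])(j := y)) (at_least (Suc N) \<phi>j 0)"
        unfolding \<Theta>_def by auto
      have "finite (T y)"
        using finite_if_not_at_least[OF y3] unfolding T_def env_j .
      then show "a \<in> (\<Union>y\<in>{a. sat I (env [a]) \<psi>}. if finite (T y) then T y else {})"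
        using y1 y2 sat_\<psi> by (auto simp: T_def)
    qed
    moreover have "finite (\<Union>y\<in>{a. sat I (env [a]) \<psi>}. if finite (T y) then T y else {})"
      using \<psi>(3) by auto
    ultimately show ?thesis by (rule finite_subset)
  qed
  ultimately show ?thesis unfolding acl_iff using pars\<Theta> fv\<Theta> by blast
qed

lemma acl_absorb_finite:
  assumes "finite F" "F \<subseteq> acl I C"
  shows "acl I (C \<union> F) \<subseteq> acl I C"
  using assms
proof (induction F rule: finite_induct)
  case (insert x F)
  have "acl I (C \<union> insert x F) \<subseteq> acl I (C \<union> F)"
  proof
    fix b assume "b \<in> acl I (C \<union> insert x F)"
    then have "b \<in> acl I (insert x (C \<union> F))" by simp
    moreover have "x \<in> acl I (C \<union> F)" using insert.prems acl_mono[of C "C \<union> F" I] by auto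
    ultimately show "b \<in> acl I (C \<union> F)" by (rule acl_insert_algebraic)
  qed
  then show ?case using insert by auto
qed simp

lemma acl_Un_subset_acl:
  assumes "finite M" "M \<subseteq> acl I (C \<union> M')"
  shows "acl I (C \<union> M) \<subseteq> acl I (C \<union> M')"
proof -
  have "acl I (C \<union> M) \<subseteq> acl I ((C \<union> M') \<union> M)" by (rule acl_mono) auto
  also have "\<dots> \<subseteq> acl I (C \<union> M')" by (rule acl_absorb_finite[OF assms])
  finally show ?thesis .
qed

lemma finite_indep_cards: "finite {card B | B. B \<subseteq> set a \<and> acl_indep I A B}"
proof -
  have "{card B | B. B \<subseteq> set a \<and> acl_indep I A B} \<subseteq> card ` Pow (set a)" by auto
  then show ?thesis by (rule finite_subset) simp
qed

lemma dim_tp_ge: "B \<subseteq> set a \<Longrightarrow> acl_indep I A B \<Longrightarrow> int (card B) \<le> dim_tp I a A"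
  unfolding dim_tp_def using finite_indep_cards by (auto intro!: Max_ge)

lemma dim_tp_obtain:
  obtains B where "B \<subseteq> set a" "acl_indep I A B" "dim_tp I a A = int (card B)"
proof -
  have "{} \<subseteq> set a \<and> acl_indep I A {}" by (simp add: acl_indep_def)
  then have "Max {card B | B. B \<subseteq> set a \<and> acl_indep I A B} \<in> {card B | B. B \<subseteq> set a \<and> acl_indep I A B}"
    using finite_indep_cards by (intro Max_in) auto
  then show ?thesis using that unfolding dim_tp_def by auto
qed

lemma dim_tp_le_length: "dim_tp I a A \<le> int (length a)"
proof -
  obtain B where "B \<subseteq> set a" "dim_tp I a A = int (card B)" using dim_tp_obtain by metis
  moreover have "card B \<le> length a"
    using calculation(1) card_mono[of "set a" B] card_length[of a] by auto
  ultimately show ?thesis by simp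
qed

lemma dim_tp_nonneg: "0 \<le> dim_tp I a A"
  unfolding dim_tp_def by simp

lemma dim_tp_mono: "set a \<subseteq> set a' \<Longrightarrow> dim_tp I a A \<le> dim_tp I a' A"
  by (metis dim_tp_obtain dim_tp_ge order_trans)

lemma acl_indep_antimono: "A \<subseteq> A' \<Longrightarrow> acl_indep I A' B \<Longrightarrow> acl_indep I A B"
  unfolding acl_indep_def by (meson Un_mono acl_mono order_refl subsetD)

lemma dim_tp_antimono: "A \<subseteq> A' \<Longrightarrow> dim_tp I a A' \<le> dim_tp I a A"
  by (metis dim_tp_obtain dim_tp_ge acl_indep_antimono)

lemma acl_exchangeD:
  "acl_exchange I \<Longrightarrow> b \<in> acl I (insert c A) \<Longrightarrow> b \<notin> acl I A \<Longrightarrow> c \<in> acl I (insert b A)"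
  unfolding acl_exchange_def by blast

lemma acl_indep_insert:
  assumes ex: "acl_exchange I" and M: "acl_indep I C M" and v: "v \<notin> acl I (C \<union> M)"
  shows "acl_indep I C (insert v M)"
  unfolding acl_indep_def
proof
  fix x assume x: "x \<in> insert v M"
  have vM: "v \<notin> M" using v acl_increasing[of "C \<union> M" I] by blast
  show "x \<notin> acl I (C \<union> (insert v M - {x}))"
  proof (cases "x = v")
    case True
    then show ?thesis using v vM by (simp add: insert_Diff_if)
  next
    case False
    then have xM: "x \<in> M" using x by auto
    show ?thesis
    proof
      assume "x \<in> acl I (C \<union> (insert v M - {x}))"
      moreover have "C \<union> (insert v M - {x}) = insert v (C \<union> (M - {x}))" using False by auto
      moreover have "x \<notin> acl I (C \<union> (M - {x}))" using M xM unfolding acl_indep_def by blast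
      ultimately have "v \<in> acl I (insert x (C \<union> (M - {x})))"
        using acl_exchangeD[OF ex] by simp
      moreover have "insert x (C \<union> (M - {x})) = C \<union> M" using xM by auto
      ultimately show False using v by simp
    qed
  qed
qed

lemma acl_exchange_swap:
  assumes ex: "acl_exchange I" and "finite M" "m \<in> M"
    and b: "b \<in> acl I (C \<union> M)" "b \<notin> acl I (C \<union> (M - {m}))"
  shows "acl I (C \<union> M) \<subseteq> acl I (C \<union> insert b (M - {m}))"
proof -
  have "insert m (C \<union> (M - {m})) = C \<union> M" using assms(3) by auto
  then have "m \<in> acl I (insert b (C \<union> (M - {m})))"
    using acl_exchangeD[OF ex, of b m "C \<union> (M - {m})"] b by simp
  then have "M \<subseteq> acl I (C \<union> insert b (M - {m}))"
    using acl_increasing[of "C \<union> insert b (M - {m})" I] by auto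
  then show ?thesis by (rule acl_Un_subset_acl[OF assms(2)])
qed

lemma acl_indep_card_le:
  assumes ex: "acl_exchange I"
  shows "finite M \<Longrightarrow> finite B \<Longrightarrow> acl_indep I C B \<Longrightarrow> B \<subseteq> acl I (C \<union> M) \<Longrightarrow> card B \<le> card M"
proof (induction "card (M - B)" arbitrary: M rule: less_induct)
  case less
  show ?case
  proof (cases "M \<subseteq> B")
    case True
    have "B \<subseteq> M"
    proof
      fix b assume b: "b \<in> B"
      show "b \<in> M"
      proof (rule ccontr)
        assume "b \<notin> M"
        then have "acl I (C \<union> M) \<subseteq> acl I (C \<union> (B - {b}))" using True by (intro acl_mono) auto
        then show False using b less.prems(3,4) unfolding acl_indep_def by auto
      qed
    qed
    then show ?thesis using less.prems(1) card_mono by blast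
  next
    case False
    then obtain m where m: "m \<in> M" "m \<notin> B" by auto
    show ?thesis
    proof (cases "B \<subseteq> acl I (C \<union> (M - {m}))")
      case True
      have "card ((M - {m}) - B) < card (M - B)" using m less.prems(1)
        by (intro psubset_card_mono) auto
      moreover have "finite (M - {m})" using less.prems(1) by simp
      ultimately have "card B \<le> card (M - {m})"
        using less.hyps[of "M - {m}"] True less.prems(2,3) by blast
      then show ?thesis using card_Diff1_le[of M m] by linarith
    next
      case False
      then obtain b where b: "b \<in> B" "b \<notin> acl I (C \<union> (M - {m}))" by auto
      define M' where "M' = insert b (M - {m})"
      have "b \<in> acl I (C \<union> M)" using b(1) less.prems(4) by blast
      from acl_exchange_swap[OF ex less.prems(1) m(1) this b(2)]
      have BM': "B \<subseteq> acl I (C \<union> M')" using less.prems(4) by (auto simp: M'_def)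
      have "b \<notin> M - {m}" using b(2) acl_increasing[of "C \<union> (M - {m})" I] by auto
      moreover have "b \<noteq> m" using m(2) b(1) by auto
      ultimately have bM: "b \<notin> M" by auto
      have fM': "finite M'" using less.prems(1) by (simp add: M'_def)
      have "card M' = Suc (card (M - {m}))"
        unfolding M'_def using less.prems(1) bM by (intro card_insert_disjoint) auto
      also have "\<dots> = card M" using less.prems(1) m(1) by (rule card_Suc_Diff1)
      finally have cM': "card M' = card M" .
      have "M' - B = (M - B) - {m}" using b(1) by (auto simp: M'_def)
      moreover have "card ((M - B) - {m}) < card (M - B)"
        using less.prems(1) m by (intro card_Diff1_less) auto
      ultimately have "card (M' - B) < card (M - B)" by simp
      then have "card B \<le> card M'" using less.hyps[of M'] BM' less.prems(2,3) fM' by blast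
      then show ?thesis using cM' by simp
    qed
  qed
qed

lemma max_indep_spans:
  assumes ex: "acl_exchange I" and "M \<subseteq> S" "finite S" "acl_indep I C M"
    and max: "\<forall>B. B \<subseteq> S \<and> acl_indep I C B \<longrightarrow> card B \<le> card M"
  shows "S \<subseteq> acl I (C \<union> M)"
proof
  fix v assume v: "v \<in> S"
  show "v \<in> acl I (C \<union> M)"
  proof (rule ccontr)
    assume nv: "v \<notin> acl I (C \<union> M)"
    then have "card (insert v M) \<le> card M"
      using max acl_indep_insert[OF ex assms(4) nv] assms(2) v by auto
    moreover have "finite M" using assms(2,3) finite_subset by blast
    moreover have "v \<notin> M" using nv acl_increasing[of "C \<union> M" I] by blast
    ultimately show False by simp
  qed
qed

lemma dim_tp_append_acl:
  assumes ex: "acl_exchange I" and c: "set c \<subseteq> acl I (C \<union> set u)"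
  shows "dim_tp I (u @ c) C \<le> dim_tp I u C"
proof -
  obtain M where M: "M \<subseteq> set u" "acl_indep I C M" "dim_tp I u C = int (card M)"
    using dim_tp_obtain by metis
  have max: "\<forall>B. B \<subseteq> set u \<and> acl_indep I C B \<longrightarrow> card B \<le> card M"
    using dim_tp_ge M(3) by fastforce
  have span: "set u \<subseteq> acl I (C \<union> M)"
    by (rule max_indep_spans[OF ex M(1) _ M(2) max]) simp
  then have "acl I (C \<union> set u) \<subseteq> acl I (C \<union> M)" by (intro acl_Un_subset_acl) simp
  moreover obtain B where B: "B \<subseteq> set (u @ c)" "acl_indep I C B" "dim_tp I (u @ c) C = int (card B)"
    using dim_tp_obtain by metis
  ultimately have "B \<subseteq> acl I (C \<union> M)" using span c by auto
  moreover have "finite M" "finite B" using M(1) B(1) finite_subset by blast+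
  ultimately have "card B \<le> card M" using acl_indep_card_le[OF ex] B(2) by blast
  then show ?thesis using M(3) B(3) by simp
qed

lemma acl_indep_if_free_seq:
  assumes ex: "acl_exchange I"
  shows "(\<forall>i<length bs. bs ! i \<notin> acl I (C \<union> set (take i bs))) \<Longrightarrow> distinct bs \<and> acl_indep I C (set bs)"
proof (induction bs rule: rev_induct)
  case Nil then show ?case by (simp add: acl_indep_def)
next
  case (snoc b p)
  have "\<forall>i<length p. p ! i \<notin> acl I (C \<union> set (take i p))"
  proof (intro allI impI)
    fix i assume "i < length p"
    then show "p ! i \<notin> acl I (C \<union> set (take i p))"
      using snoc.prems[rule_format, of i] by (simp add: nth_append)
  qed
  then have IH: "distinct p" "acl_indep I C (set p)" using snoc.IH by auto
  have bp: "b \<notin> acl I (C \<union> set p)" using snoc.prems[rule_format, of "length p"] by simp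
  then have "b \<notin> set p" using acl_increasing[of "C \<union> set p" I] by auto
  then show ?case using IH acl_indep_insert[OF ex IH(2) bp] by simp
qed

lemma free_seq_if_acl_indep:
  assumes "distinct bs" "acl_indep I C (set bs)" "i < length bs"
  shows "bs ! i \<notin> acl I (C \<union> set (take i bs))"
proof -
  have "bs ! i \<notin> set (take i bs)"
    using assms(1,3) by (metis distinct_take id_take_nth_drop not_distinct_conv_prefix)
  then have "set (take i bs) \<subseteq> set bs - {bs ! i}" using set_take_subset by fastforce
  then have "acl I (C \<union> set (take i bs)) \<subseteq> acl I (C \<union> (set bs - {bs ! i}))" by (intro acl_mono) auto
  then show ?thesis using assms(2,3) unfolding acl_indep_def by auto
qed

section \<open>Realising types over countable sets\<close>

definition same_type :: "('r \<Rightarrow> 'a list \<Rightarrow> bool) \<Rightarrow> 'a set \<Rightarrow> 'a list \<Rightarrow> 'a list \<Rightarrow> bool" where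
  "same_type I A t t' \<longleftrightarrow> length t = length t' \<and>
     (\<forall>\<phi>::('r, 'a) fm. pars \<phi> \<subseteq> A \<and> fv \<phi> \<subseteq> {..<length t} \<longrightarrow> (sat I (env t) \<phi> \<longleftrightarrow> sat I (env t') \<phi>))"

lemma same_typeD:
  fixes \<phi> :: "('r, 'a) fm"
  assumes "same_type I A t t'" "pars \<phi> \<subseteq> A" "fv \<phi> \<subseteq> {..<length t}"
  shows "sat I (env t) \<phi> = sat I (env t') \<phi>"
  using assms unfolding same_type_def by blast

lemma env_snoc: "(env p)(length p := b) = env (p @ [b])"
  by (auto simp: fun_eq_iff env_def nth_append)

lemma same_type_extension_solutions:
  assumes tp: "same_type I A p p'"
    and \<chi>: "pars \<chi> \<subseteq> A" "fv \<chi> \<subseteq> {..length p}" "sat I (env (p @ [b])) \<chi>"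
  shows "{a. sat I (env (p' @ [a])) \<chi>} \<noteq> {}"
    and "b \<notin> acl I (A \<union> set p) \<Longrightarrow> infinite {a. sat I (env (p' @ [a])) \<chi>}"
proof -
  let ?k = "length p"
  have lp': "length p' = ?k" using tp by (simp add: same_type_def)
  have sols: "{a. sat I ((env q)(?k := a)) \<chi>} = {a. sat I (env (q @ [a])) \<chi>}" if "length q = ?k" for q
    using env_snoc[of q] that by simp
  have "sat I (env p) (Ex ?k \<chi>)" using \<chi>(3) env_snoc[of p b] by (auto intro!: exI[of _ b])
  moreover have "sat I (env p) (Ex ?k \<chi>) = sat I (env p') (Ex ?k \<chi>)"
    using \<chi>(1,2) by (intro same_typeD[OF tp]) auto
  ultimately have "sat I (env p') (Ex ?k \<chi>)" by blast
  then show "{a. sat I (env (p' @ [a])) \<chi>} \<noteq> {}" using sols[OF lp'] by auto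
  assume nalg: "b \<notin> acl I (A \<union> set p)"
  show "infinite {a. sat I (env (p' @ [a])) \<chi>}"
  proof
    assume fin: "finite {a. sat I (env (p' @ [a])) \<chi>}"
    define N where "N = card {a. sat I (env (p' @ [a])) \<chi>}"
    have at_least_fv: "fv (at_least (Suc N) \<chi> ?k) \<subseteq> {..<?k}"
      using \<chi>(2) fv_at_least[of "Suc N" \<chi> ?k] by fastforce
    have "\<not> sat I (env p') (at_least (Suc N) \<chi> ?k)"
      using card_ge_if_at_least[of I "env p'" "Suc N" \<chi> ?k] fin sols[OF lp'] by (auto simp: N_def)
    then have "\<not> sat I (env p) (at_least (Suc N) \<chi> ?k)"
      using same_typeD[OF tp _ at_least_fv] pars_at_least[of "Suc N" \<chi> ?k] \<chi>(1) by auto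
    then have "finite {a. sat I ((env p)(?k := a)) \<chi>}" by (rule finite_if_not_at_least)
    then have "finite {a. sat I (env [a]) (inst_prefix p \<chi>)}"
      using sols[of p] by (simp add: sat_inst_prefix)
    then have "b \<in> acl I (A \<union> set p)" unfolding acl_iff
      using \<chi> pars_inst_prefix[of p \<chi>] fv_inst_prefix[of \<chi> p]
      by (intro exI[of _ "inst_prefix p \<chi>"]) (auto simp: sat_inst_prefix)
    then show False using nalg by simp
  qed
qed

lemma same_type_extension_avoiding:
  fixes I :: "'r \<Rightarrow> 'a list \<Rightarrow> bool"
  assumes tp: "same_type I A p p'" and "finite G"
    and G: "\<forall>\<phi>\<in>G. pars \<phi> \<subseteq> A \<and> fv \<phi> \<subseteq> {..length p} \<and> sat I (env (p @ [b])) \<phi>"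
    and "finite Bad" and "Bad \<noteq> {} \<Longrightarrow> b \<notin> acl I (A \<union> set p)"
  obtains a where "a \<notin> Bad" "\<forall>\<phi>\<in>G. sat I (env (p' @ [a])) \<phi>"
proof -
  obtain l where l: "set l = G" using finite_list[OF \<open>finite G\<close>] by blast
  have \<chi>: "pars (Conjs l) \<subseteq> A" "fv (Conjs l) \<subseteq> {..length p}" "sat I (env (p @ [b])) (Conjs l)"
    using G l by (auto simp: pars_Conjs fv_Conjs sat_Conjs)
  define Sol where "Sol = {a. sat I (env (p' @ [a])) (Conjs l)}"
  have "Sol - Bad \<noteq> {}"
  proof (cases "Bad = {}")
    case True
    then show ?thesis using same_type_extension_solutions(1)[OF tp \<chi>] by (simp add: Sol_def)
  next
    case False
    then have "infinite Sol"
      using same_type_extension_solutions(2)[OF tp \<chi>] assms(5) unfolding Sol_def by blast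
    then have "infinite (Sol - Bad)" by (rule Diff_infinite_finite[OF \<open>finite Bad\<close>])
    then show ?thesis using infinite_imp_nonempty by blast
  qed
  then obtain a where "a \<in> Sol" "a \<notin> Bad" by blast
  then show ?thesis using that l by (auto simp: Sol_def sat_Conjs)
qed

text \<open>
  The partial type over \<open>A \<union> A0 \<union> set p'\<close> whose realisations \<open>a\<close> extend \<open>p \<mapsto> p'\<close> to
  \<open>p @ [b] \<mapsto> p' @ [a]\<close>: the type of \<open>b\<close> over \<open>A \<union> set p\<close> transported to \<open>p'\<close>, together
  with the negations of all algebraic formulas when \<open>b\<close> is not algebraic.
\<close>

definition ext_type ::
  "('r \<Rightarrow> 'a list \<Rightarrow> bool) \<Rightarrow> 'a set \<Rightarrow> 'a set \<Rightarrow> 'a list \<Rightarrow> 'a list \<Rightarrow> 'a \<Rightarrow> ('r, 'a) fm set" where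
  "ext_type I A A0 p p' b =
     inst_prefix p' ` {\<phi>. pars \<phi> \<subseteq> A \<and> fv \<phi> \<subseteq> {..length p} \<and> sat I (env (p @ [b])) \<phi>} \<union>
     (if b \<notin> acl I (A \<union> set p)
      then {Neg \<theta> | \<theta>. pars \<theta> \<subseteq> A \<union> A0 \<union> set p' \<and> fv \<theta> \<subseteq> {0} \<and> finite {a. sat I (env [a]) \<theta>}}
      else {})"

lemma ext_type_params:
  assumes "same_type I A p p'" "\<psi> \<in> ext_type I A A0 p p' b"
  shows "pars \<psi> \<subseteq> A \<union> A0 \<union> set p' \<and> fv \<psi> \<subseteq> {0}"
proof -
  have lp': "length p' = length p" using assms(1) by (simp add: same_type_def)
  consider \<phi> where "pars \<phi> \<subseteq> A" "fv \<phi> \<subseteq> {..length p}" "\<psi> = inst_prefix p' \<phi>"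
    | \<theta> where "pars \<theta> \<subseteq> A \<union> A0 \<union> set p'" "fv \<theta> \<subseteq> {0}" "\<psi> = Neg \<theta>"
    using assms(2) by (auto simp: ext_type_def split: if_splits)
  then show ?thesis
  proof cases
    case (1 \<phi>)
    then show ?thesis using pars_inst_prefix[of p' \<phi>] fv_inst_prefix[of \<phi> p'] lp' by auto
  qed simp
qed

lemma ext_type_finitely_satisfiable:
  fixes I :: "'r \<Rightarrow> 'a list \<Rightarrow> bool"
  assumes tp: "same_type I A p p'" and F: "finite \<Phi>" "\<Phi> \<subseteq> ext_type I A A0 p p' b"
  shows "\<exists>a. \<forall>\<phi>\<in>\<Phi>. sat I (env [a]) \<phi>"
proof -
  define G where "G = {\<phi>::('r, 'a) fm. pars \<phi> \<subseteq> A \<and> fv \<phi> \<subseteq> {..length p} \<and> sat I (env (p @ [b])) \<phi>}"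
  obtain G0 where G0: "G0 \<subseteq> G" "finite G0" "\<Phi> \<inter> inst_prefix p' ` G = inst_prefix p' ` G0"
    using finite_subset_image[of "\<Phi> \<inter> inst_prefix p' ` G" "inst_prefix p'" G] F(1) by auto
  define Bad where "Bad = (\<Union>\<psi>\<in>\<Phi> - inst_prefix p' ` G. {a. \<not> sat I (env [a]) \<psi>})"
  have "finite Bad" unfolding Bad_def
  proof (rule finite_UN_I)
    fix \<psi> assume "\<psi> \<in> \<Phi> - inst_prefix p' ` G"
    then obtain \<theta> where "\<psi> = Neg \<theta>" "finite {a. sat I (env [a]) \<theta>}"
      using F(2) by (auto simp: ext_type_def G_def split: if_splits)
    then show "finite {a. \<not> sat I (env [a]) \<psi>}" by simp
  qed (use F(1) in simp)
  moreover have "b \<notin> acl I (A \<union> set p)" if "Bad \<noteq> {}"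
    using that F(2) by (auto simp: Bad_def ext_type_def G_def split: if_splits)
  moreover have "\<forall>\<phi>\<in>G0. pars \<phi> \<subseteq> A \<and> fv \<phi> \<subseteq> {..length p} \<and> sat I (env (p @ [b])) \<phi>"
    using G0(1) by (auto simp: G_def)
  ultimately obtain a where a: "a \<notin> Bad" "\<forall>\<phi>\<in>G0. sat I (env (p' @ [a])) \<phi>"
    using same_type_extension_avoiding[OF tp G0(2)] by blast
  have "sat I (env [a]) \<psi>" if "\<psi> \<in> \<Phi>" for \<psi>
  proof (cases "\<psi> \<in> inst_prefix p' ` G")
    case True
    then have "\<psi> \<in> inst_prefix p' ` G0" using that by (simp add: G0(3)[symmetric])
    then obtain \<phi> where "\<phi> \<in> G0" "\<psi> = inst_prefix p' \<phi>" by blast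
    then show ?thesis using a(2) by (simp add: sat_inst_prefix)
  next
    case False
    then show ?thesis using a(1) that by (auto simp: Bad_def)
  qed
  then show ?thesis by blast
qed

lemma realize_step:
  fixes I :: "'r \<Rightarrow> 'a list \<Rightarrow> bool"
  assumes satu: "aleph1_saturated I" and "countable A" "countable A0"
    and tp: "same_type I A p p'"
  obtains a where "same_type I A (p @ [b]) (p' @ [a])"
    and "b \<notin> acl I (A \<union> set p) \<Longrightarrow> a \<notin> acl I (A \<union> A0 \<union> set p')"
proof -
  let ?\<Phi> = "ext_type I A A0 p p' b"
  have "countable (A \<union> A0 \<union> set p')" using assms(2,3) by (simp add: countable_finite)
  moreover have "\<forall>\<phi>\<in>?\<Phi>. pars \<phi> \<subseteq> A \<union> A0 \<union> set p' \<and> fv \<phi> \<subseteq> {0}"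
    using ext_type_params[OF tp] by blast
  moreover have "\<forall>\<Phi>. finite \<Phi> \<and> \<Phi> \<subseteq> ?\<Phi> \<longrightarrow> (\<exists>a. \<forall>\<phi>\<in>\<Phi>. sat I (env [a]) \<phi>)"
    using ext_type_finitely_satisfiable[OF tp] by blast
  ultimately obtain a where a: "\<forall>\<phi>\<in>?\<Phi>. sat I (env [a]) \<phi>"
    using satu[unfolded aleph1_saturated_def, rule_format, of "A \<union> A0 \<union> set p'" ?\<Phi>] by blast
  have "sat I (env (p @ [b])) \<phi> = sat I (env (p' @ [a])) \<phi>"
    if "pars \<phi> \<subseteq> A" "fv \<phi> \<subseteq> {..length p}" for \<phi> :: "('r, 'a) fm"
  proof (cases "sat I (env (p @ [b])) \<phi>")
    case True
    then have "inst_prefix p' \<phi> \<in> ?\<Phi>" using that by (auto simp: ext_type_def)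
    then show ?thesis using a True by (auto simp: sat_inst_prefix)
  next
    case False
    then have "inst_prefix p' (Neg \<phi>) \<in> ?\<Phi>" using that by (auto simp: ext_type_def)
    then show ?thesis using a False by (auto simp: sat_inst_prefix)
  qed
  then have "same_type I A (p @ [b]) (p' @ [a])"
    using tp by (auto simp: same_type_def lessThan_Suc_atMost)
  moreover have "a \<notin> acl I (A \<union> A0 \<union> set p')" if "b \<notin> acl I (A \<union> set p)"
  proof
    assume "a \<in> acl I (A \<union> A0 \<union> set p')"
    then obtain \<theta> where \<theta>: "pars \<theta> \<subseteq> A \<union> A0 \<union> set p'" "fv \<theta> \<subseteq> {0}"
      "finite {a. sat I (env [a]) \<theta>}" "sat I (env [a]) \<theta>"
      unfolding acl_iff by blast
    then have "Neg \<theta> \<in> ?\<Phi>" using that by (auto simp: ext_type_def)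
    then show False using a \<theta>(4) by auto
  qed
  ultimately show ?thesis using that by blast
qed

lemma realize_type:
  fixes I :: "'r \<Rightarrow> 'a list \<Rightarrow> bool"
  assumes "aleph1_saturated I" "countable A" "countable A0"
  shows "\<exists>w'. same_type I A w w' \<and> (\<forall>i<length w. w ! i \<notin> acl I (A \<union> set (take i w)) \<longrightarrow>
            w' ! i \<notin> acl I (A \<union> A0 \<union> set (take i w')))"
proof (induction w rule: rev_induct)
  case Nil then show ?case by (simp add: same_type_def)
next
  case (snoc b p)
  then obtain p' where p': "same_type I A p p'"
    "\<forall>i<length p. p ! i \<notin> acl I (A \<union> set (take i p)) \<longrightarrow> p' ! i \<notin> acl I (A \<union> A0 \<union> set (take i p'))"
    by blast
  have lp: "length p' = length p" using p'(1) by (simp add: same_type_def)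
  obtain a where a: "same_type I A (p @ [b]) (p' @ [a])"
    "b \<notin> acl I (A \<union> set p) \<Longrightarrow> a \<notin> acl I (A \<union> A0 \<union> set p')"
    using realize_step[OF assms p'(1)] by metis
  have "(p' @ [a]) ! i \<notin> acl I (A \<union> A0 \<union> set (take i (p' @ [a])))"
    if "i < length (p @ [b])" "(p @ [b]) ! i \<notin> acl I (A \<union> set (take i (p @ [b])))" for i
    using that p'(2) a(2) lp by (cases "i < length p") (auto simp: nth_append less_Suc_eq)
  then show ?case using a(1) by blast
qed

lemma same_type_mem:
  fixes I :: "'r \<Rightarrow> 'a list \<Rightarrow> bool"
  assumes tp: "same_type I A w w'" and "defbl I A W" "w \<in> W"
  shows "w' \<in> W"
proof -
  obtain N and \<phi> :: "('r, 'a) fm" where \<phi>: "pars \<phi> \<subseteq> A" "fv \<phi> \<subseteq> {..<N}"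
    "W = {xs \<in> tuples N. sat I (env xs) \<phi>}"
    using assms(2) unfolding defbl_def by blast
  then have "length w = N" "sat I (env w) \<phi>" using assms(3) by (auto simp: tuples_def)
  then show ?thesis using same_typeD[OF tp \<phi>(1)] tp \<phi> by (auto simp: same_type_def tuples_def)
qed

lemma same_type_nth_eq:
  fixes I :: "'r \<Rightarrow> 'a list \<Rightarrow> bool"
  assumes tp: "same_type I A w w'" and "i < length w" "j < length w" "w ! i = w ! j"
  shows "w' ! i = w' ! j"
proof -
  let ?\<phi> = "Eq (Var i) (Var j) :: ('r, 'a) fm"
  have "sat I (env w) ?\<phi> = sat I (env w') ?\<phi>" using assms(2,3) by (intro same_typeD[OF tp]) auto
  then show ?thesis using assms(2-4) tp by (simp add: env_def same_type_def)
qed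

lemma same_type_drop:
  fixes I :: "'r \<Rightarrow> 'a list \<Rightarrow> bool"
  assumes "same_type I A (u @ w) (u' @ w')" "length u = length u'"
  shows "same_type I A w w'"
  unfolding same_type_def
proof (intro conjI allI impI)
  show "length w = length w'" using assms by (simp add: same_type_def)
next
  fix \<phi> :: "('r, 'a) fm" assume \<phi>: "pars \<phi> \<subseteq> A \<and> fv \<phi> \<subseteq> {..<length w}"
  let ?\<rho> = "\<lambda>i. i + length u"
  have inj: "inj ?\<rho>" by (simp add: inj_def)
  have shift: "env (v @ w0) \<circ> ?\<rho> = env w0" if "length v = length u" for v w0 :: "'a list"
    using that by (auto simp: fun_eq_iff env_def nth_append)
  have "pars (ren ?\<rho> \<phi>) \<subseteq> A" "fv (ren ?\<rho> \<phi>) \<subseteq> {..<length (u @ w)}"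
    using \<phi> by (auto simp: pars_ren fv_ren[OF inj])
  then have "sat I (env (u @ w)) (ren ?\<rho> \<phi>) = sat I (env (u' @ w')) (ren ?\<rho> \<phi>)"
    by (intro same_typeD[OF assms(1)])
  moreover have "sat I (env (u @ w)) (ren ?\<rho> \<phi>) = sat I (env w) \<phi>"
    using sat_ren[OF inj, of I "env (u @ w)" \<phi>] shift[of u w] by simp
  moreover have "sat I (env (u' @ w')) (ren ?\<rho> \<phi>) = sat I (env w') \<phi>"
    using sat_ren[OF inj, of I "env (u' @ w')" \<phi>] shift[of u' w'] assms(2) by simp
  ultimately show "sat I (env w) \<phi> = sat I (env w') \<phi>" by simp
qed

lemma defbl_tuples: "defbl I A X \<Longrightarrow> \<exists>N. X \<subseteq> tuples N"
  unfolding defbl_def by blast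

lemma defbl_tuplesD:
  fixes I :: "'r \<Rightarrow> 'a list \<Rightarrow> bool"
  assumes "defbl I A X" "X \<subseteq> tuples N"
  obtains \<phi> :: "('r, 'a) fm" where "pars \<phi> \<subseteq> A" "fv \<phi> \<subseteq> {..<N}" "X = {xs \<in> tuples N. sat I (env xs) \<phi>}"
proof (cases "X = {}")
  case True
  then show ?thesis using that[of "Neg Truth"] by simp
next
  case False
  obtain n0 and \<phi> :: "('r, 'a) fm" where
    \<phi>: "pars \<phi> \<subseteq> A" "fv \<phi> \<subseteq> {..<n0}" "X = {xs \<in> tuples n0. sat I (env xs) \<phi>}"
    using assms(1) unfolding defbl_def by blast
  have "n0 = N" using False assms(2) \<phi>(3) by (auto simp: tuples_def)
  then show ?thesis using \<phi> that by blast
qed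

lemma defbl_mono: "A \<subseteq> B \<Longrightarrow> defbl I A X \<Longrightarrow> defbl I B X"
  unfolding defbl_def by blast

lemma defbl_Int:
  fixes I :: "'r \<Rightarrow> 'a list \<Rightarrow> bool"
  assumes "defbl I A X" "defbl I A Y" "X \<subseteq> tuples N" "Y \<subseteq> tuples N"
  shows "defbl I A (X \<inter> Y)"
proof -
  obtain \<phi> :: "('r, 'a) fm" where "pars \<phi> \<subseteq> A" "fv \<phi> \<subseteq> {..<N}" "X = {xs \<in> tuples N. sat I (env xs) \<phi>}"
    using defbl_tuplesD[OF assms(1,3)] by blast
  moreover obtain \<psi> :: "('r, 'a) fm" where "pars \<psi> \<subseteq> A" "fv \<psi> \<subseteq> {..<N}" "Y = {xs \<in> tuples N. sat I (env xs) \<psi>}"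
    using defbl_tuplesD[OF assms(2,4)] by blast
  ultimately show ?thesis unfolding defbl_def
    by (intro exI[of _ N] exI[of _ "Conj \<phi> \<psi>"]) auto
qed

lemma defbl_Diff:
  fixes I :: "'r \<Rightarrow> 'a list \<Rightarrow> bool"
  assumes "defbl I A X" "defbl I A Y" "X \<subseteq> tuples N" "Y \<subseteq> tuples N"
  shows "defbl I A (X - Y)"
proof -
  obtain \<phi> :: "('r, 'a) fm" where "pars \<phi> \<subseteq> A" "fv \<phi> \<subseteq> {..<N}" "X = {xs \<in> tuples N. sat I (env xs) \<phi>}"
    using defbl_tuplesD[OF assms(1,3)] by blast
  moreover obtain \<psi> :: "('r, 'a) fm" where "pars \<psi> \<subseteq> A" "fv \<psi> \<subseteq> {..<N}" "Y = {xs \<in> tuples N. sat I (env xs) \<psi>}"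
    using defbl_tuplesD[OF assms(2,4)] by blast
  ultimately show ?thesis unfolding defbl_def
    by (intro exI[of _ N] exI[of _ "Conj \<phi> (Neg \<psi>)"]) auto
qed

lemma defbl_proj:
  fixes I :: "'r \<Rightarrow> 'a list \<Rightarrow> bool"
  assumes "defbl I A Z" "Z \<subseteq> tuples (n + m)"
  shows "defbl I A {u \<in> tuples n. \<exists>v. length v = m \<and> u @ v \<in> Z}"
proof -
  obtain \<phi> :: "('r, 'a) fm" where
    \<phi>: "pars \<phi> \<subseteq> A" "fv \<phi> \<subseteq> {..<n + m}" "Z = {xs \<in> tuples (n + m). sat I (env xs) \<phi>}"
    using defbl_tuplesD[OF assms] by blast
  have "{u \<in> tuples n. \<exists>v. length v = m \<and> u @ v \<in> Z} = {u \<in> tuples n. sat I (env u) (exs [n..<n + m] \<phi>)}"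
    using sat_exs_append[OF \<phi>(2)] \<phi>(3) by (auto simp: tuples_def)
  moreover have "fv (exs [n..<n + m] \<phi>) \<subseteq> {..<n}" using \<phi>(2) by (auto simp: fv_exs)
  ultimately show ?thesis using \<phi>(1) unfolding defbl_def by (metis pars_exs)
qed

lemma acl_of_unique_fiber:
  fixes I :: "'r \<Rightarrow> 'a list \<Rightarrow> bool"
  assumes Z: "defbl I A Z" "Z \<subseteq> tuples (n + m)" and lu: "length u = n" and lv: "length v = m"
    and uv: "u @ v \<in> Z" and uniq: "\<forall>v'. length v' = m \<and> u @ v' \<in> Z \<longrightarrow> v' = v"
  shows "set v \<subseteq> acl I (A \<union> set u)"
proof
  fix c assume "c \<in> set v"
  then obtain j where j: "j < m" "c = v ! j" using lv by (auto simp: in_set_conv_nth)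
  obtain \<phi> :: "('r, 'a) fm" where
    \<phi>: "pars \<phi> \<subseteq> A" "fv \<phi> \<subseteq> {..<n + m}" "Z = {xs \<in> tuples (n + m). sat I (env xs) \<phi>}"
    using defbl_tuplesD[OF Z] by blast
  define \<rho> where "\<rho> = (\<lambda>i::nat. if i < n then i else Suc i)"
  define \<chi> where "\<chi> = exs [Suc n..<Suc n + m] (Conj (Eq (Var n) (Var (Suc n + j))) (ren \<rho> \<phi>))"
  have inj\<rho>: "inj \<rho>" by (auto simp: inj_def \<rho>_def split: if_splits)
  have "fv (ren \<rho> \<phi>) = \<rho> ` fv \<phi>" by (rule fv_ren[OF inj\<rho>])
  then have fv_ren\<phi>: "fv (ren \<rho> \<phi>) \<subseteq> {..<Suc n + m} - {n}"
    using \<phi>(2) by (auto simp: \<rho>_def)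
  then have fv\<chi>: "fv \<chi> \<subseteq> {..n}" using j(1) by (auto simp: \<chi>_def fv_exs)
  have pars\<chi>: "pars \<chi> \<subseteq> A" using \<phi>(1) by (simp add: \<chi>_def pars_exs pars_ren)
  have sat\<chi>: "sat I (env (u @ [a])) \<chi> \<longleftrightarrow> (\<exists>v'. length v' = m \<and> u @ v' \<in> Z \<and> v' ! j = a)" for a
  proof -
    have conj: "sat I (env (u @ [a] @ w)) (Conj (Eq (Var n) (Var (Suc n + j))) (ren \<rho> \<phi>))
        \<longleftrightarrow> a = w ! j \<and> sat I (env (u @ w)) \<phi>" if "length w = m" for w
    proof -
      have "env (u @ [a] @ w) \<circ> \<rho> = env (u @ w)"
        using that lu by (auto simp: fun_eq_iff env_def \<rho>_def nth_append nth_Cons')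
      moreover have "env (u @ [a] @ w) n = a" "env (u @ [a] @ w) (Suc n + j) = w ! j"
        using that lu j(1) by (auto simp: env_def nth_append)
      ultimately show ?thesis by (simp add: sat_ren[OF inj\<rho>])
    qed
    have fvc: "fv (Conj (Eq (Var n) (Var (Suc n + j))) (ren \<rho> \<phi>)) \<subseteq> {..<Suc n + m}"
      using fv_ren\<phi> j(1) by auto
    have "sat I (env (u @ [a])) \<chi> \<longleftrightarrow>
        (\<exists>w. length w = m \<and> sat I (env (u @ [a] @ w)) (Conj (Eq (Var n) (Var (Suc n + j))) (ren \<rho> \<phi>)))"
      using sat_exs_append[OF fvc, of "u @ [a]" I] lu unfolding \<chi>_def by simp
    also have "\<dots> \<longleftrightarrow> (\<exists>w. length w = m \<and> a = w ! j \<and> sat I (env (u @ w)) \<phi>)"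
      using conj by blast
    also have "\<dots> \<longleftrightarrow> (\<exists>v'. length v' = m \<and> u @ v' \<in> Z \<and> v' ! j = a)"
      using \<phi>(3) lu by (auto simp: tuples_def)
    finally show ?thesis .
  qed
  have "{a. sat I (env [a]) (inst_prefix u \<chi>)} = {a. \<exists>v'. length v' = m \<and> u @ v' \<in> Z \<and> v' ! j = a}"
    by (simp add: sat_inst_prefix sat\<chi>)
  also have "\<dots> = {v ! j}"
  proof
    show "{a. \<exists>v'. length v' = m \<and> u @ v' \<in> Z \<and> v' ! j = a} \<subseteq> {v ! j}" using uniq by blast
    show "{v ! j} \<subseteq> {a. \<exists>v'. length v' = m \<and> u @ v' \<in> Z \<and> v' ! j = a}" using uv lv by blast
  qed
  finally have sols: "{a. sat I (env [a]) (inst_prefix u \<chi>)} = {v ! j}" .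
  show "c \<in> acl I (A \<union> set u)" unfolding acl_iff
  proof (intro exI conjI)
    show "pars (inst_prefix u \<chi>) \<subseteq> A \<union> set u" using pars_inst_prefix[of u \<chi>] pars\<chi> by auto
    show "fv (inst_prefix u \<chi>) \<subseteq> {0}" using fv_inst_prefix[of \<chi> u] fv\<chi> lu by auto
    show "finite {a. sat I (env [a]) (inst_prefix u \<chi>)}" using sols by simp
    show "sat I (env [c]) (inst_prefix u \<chi>)" using sols j(2) by blast
  qed
qed

lemma exists_fm_at_var:
  fixes \<phi> :: "('r, 'a) fm"
  assumes fv\<phi>: "fv \<phi> \<subseteq> {..<Suc (length bs)}"
  shows "\<exists>\<chi> :: ('r, 'a) fm. fv \<chi> \<subseteq> {i} \<and> (\<forall>e. sat I e \<chi> \<longleftrightarrow> sat I (env (e i # bs)) \<phi>)"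
proof -
  define L where "L = Suc i"
  let ?k = "length bs"
  define \<sigma> where "\<sigma> t = (if L < t \<and> t \<le> L + ?k then Some (bs ! (t - L - 1)) else None)" for t
  define \<chi> where "\<chi> = assign_var L i (psub \<sigma> (ren (\<lambda>t. t + L) \<phi>))"
  have inj: "inj (\<lambda>t::nat. t + L)" by (auto simp: inj_def)
  have iL: "i \<noteq> L" by (simp add: L_def)
  have "sat I e \<chi> \<longleftrightarrow> sat I (env (e i # bs)) \<phi>" for e
  proof -
    have "sat I e \<chi> \<longleftrightarrow> sat I (upd_env (e(L := e i)) \<sigma> \<circ> (\<lambda>t. t + L)) \<phi>"
      by (simp add: \<chi>_def sat_assign_var[OF iL] sat_psub sat_ren[OF inj])
    also have "\<dots> \<longleftrightarrow> sat I (env (e i # bs)) \<phi>"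
    proof (rule sat_cong, intro ballI)
      fix t assume "t \<in> fv \<phi>"
      then have "t < Suc ?k" using fv\<phi> by auto
      then show "(upd_env (e(L := e i)) \<sigma> \<circ> (\<lambda>t. t + L)) t = env (e i # bs) t"
        by (cases t) (auto simp: upd_env_def \<sigma>_def env_def)
    qed
    finally show ?thesis .
  qed
  moreover have "fv (psub \<sigma> (ren (\<lambda>t. t + L) \<phi>)) \<subseteq> {L}"
  proof
    fix x assume "x \<in> fv (psub \<sigma> (ren (\<lambda>t. t + L) \<phi>))"
    then have "x \<in> fv (ren (\<lambda>t. t + L) \<phi>) - {t. \<sigma> t \<noteq> None}" using fv_psub by blast
    then obtain t where "t \<in> fv \<phi>" "x = t + L" "\<sigma> x = None" using fv_ren[OF inj, of \<phi>] by auto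
    then show "x \<in> {L}" using fv\<phi> by (auto simp: \<sigma>_def split: if_splits)
  qed
  then have "fv \<chi> \<subseteq> {i}" using fv_assign_var[of L i] unfolding \<chi>_def by fastforce
  ultimately show ?thesis by blast
qed

lemma definable_box:
  fixes I :: "'r \<Rightarrow> 'a list \<Rightarrow> bool" and \<phi> :: "('r, 'a) fm"
  assumes fv\<phi>: "fv \<phi> \<subseteq> {..<Suc k}" and len: "\<forall>i<L. length (bs i) = k"
  shows "definable I (box (map (\<lambda>i. {c. sat I (env (c # bs i)) \<phi>}) [0..<L]))"
proof -
  have "\<forall>i. \<exists>\<chi> :: ('r, 'a) fm. i < L \<longrightarrow> fv \<chi> \<subseteq> {i} \<and> (\<forall>e. sat I e \<chi> \<longleftrightarrow> sat I (env (e i # bs i)) \<phi>)"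
  proof (intro allI impI)
    fix i
    show "\<exists>\<chi> :: ('r, 'a) fm. i < L \<longrightarrow> fv \<chi> \<subseteq> {i} \<and> (\<forall>e. sat I e \<chi> \<longleftrightarrow> sat I (env (e i # bs i)) \<phi>)"
    proof (cases "i < L")
      case True
      then have "fv \<phi> \<subseteq> {..<Suc (length (bs i))}" using fv\<phi> len by simp
      then show ?thesis using exists_fm_at_var[of \<phi> "bs i" i I] True by blast
    qed simp
  qed
  from choice[OF this] obtain \<chi> :: "nat \<Rightarrow> ('r, 'a) fm" where
    \<chi>: "\<forall>i<L. fv (\<chi> i) \<subseteq> {i} \<and> (\<forall>e. sat I e (\<chi> i) \<longleftrightarrow> sat I (env (e i # bs i)) \<phi>)"
    by blast
  define \<Psi> where "\<Psi> = Conjs (map \<chi> [0..<L])"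
  have sat\<Psi>: "sat I (env xs) \<Psi> \<longleftrightarrow> (\<forall>i<L. sat I (env (env xs i # bs i)) \<phi>)" for xs
    unfolding \<Psi>_def sat_Conjs using \<chi> by auto
  have "box (map (\<lambda>i. {c. sat I (env (c # bs i)) \<phi>}) [0..<L]) = {xs \<in> tuples L. sat I (env xs) \<Psi>}"
  proof (intro set_eqI)
    fix xs
    show "xs \<in> box (map (\<lambda>i. {c. sat I (env (c # bs i)) \<phi>}) [0..<L]) \<longleftrightarrow>
        xs \<in> {xs \<in> tuples L. sat I (env xs) \<Psi>}"
    proof (cases "length xs = L")
      case True
      then have "\<forall>i<L. env xs i = xs ! i" by (simp add: env_def)
      then show ?thesis using True sat\<Psi>[of xs] by (simp add: box_def tuples_def)
    qed (simp add: box_def tuples_def)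
  qed
  moreover have "fv \<Psi> \<subseteq> {..<L}" using \<chi> by (fastforce simp: \<Psi>_def fv_Conjs)
  ultimately show ?thesis unfolding definable_def defbl_def by blast
qed
section \<open>Dimension of definable sets\<close>

lemma dim_attained:
  assumes "defbl I A W" "W \<noteq> {}"
  obtains A0 where "finite A0" "defbl I A0 W" "\<And>w. w \<in> W \<Longrightarrow> dim_tp I w A0 \<le> dim I W"
    "\<exists>w\<in>W. dim_tp I w A0 = dim I W"
proof -
  define A0 where "A0 = (SOME A0. finite A0 \<and> defbl I A0 W)"
  obtain N \<phi> where \<phi>: "pars \<phi> \<subseteq> A" "fv \<phi> \<subseteq> {..<N}" "W = {xs \<in> tuples N. sat I (env xs) \<phi>}"
    using assms(1) unfolding defbl_def by blast
  then have "finite (pars \<phi>) \<and> defbl I (pars \<phi>) W"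
    using finite_pars unfolding defbl_def by blast
  then have A0: "finite A0" "defbl I A0 W" unfolding A0_def by (metis (mono_tags, lifting) someI_ex)+
  have "(\<lambda>a. dim_tp I a A0) ` W \<subseteq> {0..int N}"
    using dim_tp_le_length dim_tp_nonneg \<phi>(3) by (fastforce simp: tuples_def)
  then have fin: "finite ((\<lambda>a. dim_tp I a A0) ` W)" by (rule finite_subset) simp
  have dim_W: "dim I W = Max ((\<lambda>a. dim_tp I a A0) ` W)"
    using assms(2) by (simp add: dim_def dim_over_def A0_def)
  show ?thesis
  proof (rule that[OF A0])
    fix w assume "w \<in> W"
    then show "dim_tp I w A0 \<le> dim I W" unfolding dim_W using fin by (intro Max_ge) auto
  next
    have "Max ((\<lambda>a. dim_tp I a A0) ` W) \<in> (\<lambda>a. dim_tp I a A0) ` W"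
      using fin assms(2) by (intro Max_in) auto
    then show "\<exists>w\<in>W. dim_tp I w A0 = dim I W" unfolding dim_W by auto
  qed
qed

text \<open>
  A basis of \<open>w\<close> is placed in front of \<open>w\<close>, so that its independence is a property of
  initial segments, which the realisation preserves.
\<close>

lemma exists_realization_dim_tp_ge:
  fixes I :: "'r \<Rightarrow> 'a list \<Rightarrow> bool"
  assumes ex: "acl_exchange I" and satu: "aleph1_saturated I" and cA: "countable A"
    and cA0: "countable A0" and W: "defbl I A W" and w: "w \<in> W"
  obtains w' where "w' \<in> W" "dim_tp I w A \<le> dim_tp I w' (A \<union> A0)"
proof -
  obtain B where B: "B \<subseteq> set w" "acl_indep I A B" "dim_tp I w A = int (card B)"
    using dim_tp_obtain by metis
  obtain bs where bs: "distinct bs" "set bs = B"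
    using finite_distinct_list[of B] finite_subset[OF B(1)] by blast
  define e where "e = length bs"
  obtain ext' where ext': "same_type I A (bs @ w) ext'"
    "\<forall>i<length (bs @ w). (bs @ w) ! i \<notin> acl I (A \<union> set (take i (bs @ w))) \<longrightarrow>
        ext' ! i \<notin> acl I (A \<union> A0 \<union> set (take i ext'))"
    using realize_type[OF satu cA cA0] by blast
  define bs' where "bs' = take e ext'"
  define w' where "w' = drop e ext'"
  have len: "length ext' = e + length w" using ext'(1) by (simp add: same_type_def e_def)
  have "same_type I A w w'"
    using ext'(1) len by (intro same_type_drop[of I A bs w bs' w']) (simp_all add: bs'_def w'_def e_def)
  then have w'W: "w' \<in> W" using same_type_mem W w by blast
  have sub: "set bs' \<subseteq> set w'"
  proof
    fix c assume "c \<in> set bs'"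
    then obtain t where t: "t < e" "c = ext' ! t" using len by (auto simp: bs'_def in_set_conv_nth)
    obtain j where j: "j < length w" "w ! j = bs ! t"
      using B(1) bs(2) t(1) by (metis e_def in_set_conv_nth nth_mem subsetD)
    have "ext' ! t = ext' ! (e + j)"
      using same_type_nth_eq[OF ext'(1), of t "e + j"] t j by (simp add: e_def nth_append)
    then have "c = w' ! j" using t(2) len by (simp add: w'_def)
    moreover have "length w' = length w" using len by (simp add: w'_def)
    ultimately show "c \<in> set w'" using j(1) by (metis nth_mem)
  qed
  have "\<forall>i<length bs'. bs' ! i \<notin> acl I (A \<union> A0 \<union> set (take i bs'))"
  proof (intro allI impI)
    fix i assume "i < length bs'"
    then have i: "i < e" using len by (simp add: bs'_def)
    have "(bs @ w) ! i \<notin> acl I (A \<union> set (take i (bs @ w)))"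
      using free_seq_if_acl_indep[OF bs(1), of I A i] B(2) bs(2) i by (simp add: e_def nth_append)
    then have "ext' ! i \<notin> acl I (A \<union> A0 \<union> set (take i ext'))" using ext'(2) i by (simp add: e_def)
    then show "bs' ! i \<notin> acl I (A \<union> A0 \<union> set (take i bs'))" using i by (simp add: bs'_def)
  qed
  then have ind: "distinct bs'" "acl_indep I (A \<union> A0) (set bs')"
    using acl_indep_if_free_seq[OF ex, of bs' "A \<union> A0"] by blast+
  have "int (card B) = int (card (set bs'))"
    using ind(1) len distinct_card[OF bs(1)] bs(2) by (simp add: bs'_def e_def distinct_card)
  also have "\<dots> \<le> dim_tp I w' (A \<union> A0)" by (rule dim_tp_ge[OF sub ind(2)])
  finally show ?thesis using that w'W B(3) by simp
qed

lemma dim_tp_le_dim: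
  assumes ex: "acl_exchange I" and satu: "aleph1_saturated I" and "countable A"
    and W: "defbl I A W" and w: "w \<in> W"
  shows "dim_tp I w A \<le> dim I W"
proof -
  obtain A0 where A0: "finite A0" "\<And>w. w \<in> W \<Longrightarrow> dim_tp I w A0 \<le> dim I W"
    using dim_attained[OF W] w by blast
  obtain w' where w': "w' \<in> W" "dim_tp I w A \<le> dim_tp I w' (A \<union> A0)"
    using exists_realization_dim_tp_ge[OF ex satu \<open>countable A\<close> countable_finite[OF A0(1)] W w] .
  note w'(2)
  also have "dim_tp I w' (A \<union> A0) \<le> dim_tp I w' A0" by (rule dim_tp_antimono) simp
  also have "\<dots> \<le> dim I W" by (rule A0(2)[OF w'(1)])
  finally show ?thesis .
qed

lemma append_mem_graph_iff:
  "X \<subseteq> tuples n \<Longrightarrow> length u = n \<Longrightarrow> u @ v \<in> graph X f \<longleftrightarrow> u \<in> X \<and> v = f u"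
  by (auto simp: graph_def tuples_def)

lemma graph_subset_tuples:
  "X \<subseteq> tuples n \<Longrightarrow> f ` X \<subseteq> tuples m \<Longrightarrow> graph X f \<subseteq> tuples (n + m)"
  by (auto simp: graph_def tuples_def image_subset_iff subset_iff)

text \<open>
  Upper bound: the coordinates of \<open>f(u)\<close> are algebraic over \<open>u\<close>. Lower bound: a point of
  \<open>X\<close> of maximal dimension is realised independently of the parameters of the graph.
\<close>

lemma dim_graph:
  fixes I :: "'r \<Rightarrow> 'a list \<Rightarrow> bool"
  assumes ex: "acl_exchange I" and satu: "aleph1_saturated I"
    and Z: "definable I (graph X f)" and XT: "X \<subseteq> tuples n" and fXT: "f ` X \<subseteq> tuples m"
  shows "dim I (graph X f) = dim I X"
proof (cases "X = {}")
  case True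
  then show ?thesis by (simp add: graph_def)
next
  case False
  define Z where "Z = graph X f"
  have ZT: "Z \<subseteq> tuples (n + m)" using graph_subset_tuples[OF XT fXT] by (simp add: Z_def)
  have graph_iff: "u @ v \<in> Z \<longleftrightarrow> u \<in> X \<and> v = f u" if "length u = n" for u v
    using append_mem_graph_iff[OF XT that] by (simp add: Z_def)
  obtain A1 where A1: "finite A1" "defbl I A1 Z" "\<And>z. z \<in> Z \<Longrightarrow> dim_tp I z A1 \<le> dim I Z"
      "\<exists>z\<in>Z. dim_tp I z A1 = dim I Z"
    using dim_attained[of I UNIV Z] Z False by (auto simp: definable_def Z_def graph_def)
  have "{u \<in> tuples n. \<exists>v. length v = m \<and> u @ v \<in> Z} = X"
    using XT fXT graph_iff by (auto simp: tuples_def)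
  then have XA1: "defbl I A1 X" using defbl_proj[OF A1(2) ZT] by simp
  have cA1: "countable A1" using A1(1) by (rule countable_finite)
  have "dim I Z \<le> dim I X"
  proof -
    obtain u where u: "u \<in> X" "dim_tp I (u @ f u) A1 = dim I Z"
      using A1(4) by (auto simp: Z_def graph_def)
    have "set (f u) \<subseteq> acl I (A1 \<union> set u)"
      using u(1) XT fXT graph_iff by (intro acl_of_unique_fiber[OF A1(2) ZT]) (auto simp: tuples_def)
    then have "dim_tp I (u @ f u) A1 \<le> dim_tp I u A1" by (rule dim_tp_append_acl[OF ex])
    also have "\<dots> \<le> dim I X" by (rule dim_tp_le_dim[OF ex satu cA1 XA1 u(1)])
    finally show ?thesis using u(2) by simp
  qed
  moreover have "dim I X \<le> dim I Z"
  proof -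
    obtain A0 where A0: "finite A0" "defbl I A0 X" "\<exists>b\<in>X. dim_tp I b A0 = dim I X"
      using dim_attained[OF XA1 False] by metis
    then obtain b where b: "b \<in> X" "dim_tp I b A0 = dim I X" by blast
    obtain b' where b': "b' \<in> X" "dim_tp I b A0 \<le> dim_tp I b' (A0 \<union> A1)"
      using exists_realization_dim_tp_ge[OF ex satu countable_finite[OF A0(1)] cA1 A0(2) b(1)] .
    note b(2)[symmetric]
    also note b'(2)
    also have "dim_tp I b' (A0 \<union> A1) \<le> dim_tp I b' A1" by (rule dim_tp_antimono) simp
    also have "\<dots> \<le> dim_tp I (b' @ f b') A1" by (rule dim_tp_mono) simp
    also have "\<dots> \<le> dim I Z" using A1(3) b'(1) unfolding Z_def graph_def by blast
    finally show ?thesis .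
  qed
  ultimately show ?thesis by (simp add: Z_def)
qed

lemma dim_tp_graph_generic:
  assumes ex: "acl_exchange I" and satu: "aleph1_saturated I" and "countable A"
    and Z: "defbl I A (graph X f)" and XT: "X \<subseteq> tuples n" and fXT: "f ` X \<subseteq> tuples m"
    and x: "x \<in> X" "dim_tp I x A = dim I X"
  shows "dim_tp I (x @ f x) A = dim I (graph X f)"
proof (rule antisym)
  show "dim_tp I (x @ f x) A \<le> dim I (graph X f)"
    using dim_tp_le_dim[OF ex satu \<open>countable A\<close> Z] x(1) by (auto simp: graph_def)
  have "definable I (graph X f)" using defbl_mono[OF subset_UNIV Z] by (simp add: definable_def)
  then have "dim I (graph X f) = dim_tp I x A"
    using dim_graph[OF ex satu _ XT fXT] x(2) by simp
  also have "\<dots> \<le> dim_tp I (x @ f x) A" by (rule dim_tp_mono) simp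
  finally show "dim I (graph X f) \<le> dim_tp I (x @ f x) A" .
qed


section \<open>Product topology on tuples\<close>

lemma lopen_box: "\<forall>i<length Os. openin \<tau> (Os ! i) \<Longrightarrow> lopen \<tau> (box Os)"
  unfolding lopen_def by (auto simp: box_def)

lemma box_subset_tuples: "box Os \<subseteq> tuples (length Os)"
  by (auto simp: box_def tuples_def)

lemma lopen_tuples:
  assumes "topspace \<tau> = UNIV"
  shows "lopen \<tau> (tuples n)"
proof -
  have "openin \<tau> UNIV" using assms openin_topspace by metis
  then show ?thesis unfolding lopen_def
    by (intro ballI exI[of _ "replicate n UNIV"]) (auto simp: box_def tuples_def)
qed

lemma lopen_Int:
  assumes "lopen \<tau> U" "lopen \<tau> V"
  shows "lopen \<tau> (U \<inter> V)"
  unfolding lopen_def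
proof
  fix xs assume xs: "xs \<in> U \<inter> V"
  obtain Os where Os: "length Os = length xs" "\<forall>i<length Os. openin \<tau> (Os ! i)" "xs \<in> box Os" "box Os \<subseteq> U"
    using assms(1) xs unfolding lopen_def by blast
  obtain Ps where Ps: "length Ps = length xs" "\<forall>i<length Ps. openin \<tau> (Ps ! i)" "xs \<in> box Ps" "box Ps \<subseteq> V"
    using assms(2) xs unfolding lopen_def by blast
  let ?Qs = "map2 (\<inter>) Os Ps"
  have "box ?Qs \<subseteq> box Os" "box ?Qs \<subseteq> box Ps" using Os(1) Ps(1) by (auto simp: box_def)
  moreover have "\<forall>i<length ?Qs. openin \<tau> (?Qs ! i)" using Os(1,2) Ps(1,2) by auto
  moreover have "xs \<in> box ?Qs" using Os(1,3) Ps(1,3) by (auto simp: box_def)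
  ultimately show "\<exists>Os. length Os = length xs \<and> (\<forall>i<length Os. openin \<tau> (Os ! i)) \<and> xs \<in> box Os \<and> box Os \<subseteq> U \<inter> V"
    using Os(1,4) Ps(1,4) by (intro exI[of _ ?Qs]) auto
qed

lemma box_append: "box (Os1 @ Os2) = lprod (box Os1) (box Os2)"
proof (intro set_eqI iffI)
  fix z assume "z \<in> box (Os1 @ Os2)"
  then have len: "length z = length Os1 + length Os2"
    and mem: "\<And>i. i < length Os1 + length Os2 \<Longrightarrow> z ! i \<in> (Os1 @ Os2) ! i"
    by (auto simp: box_def)
  let ?k = "length Os1"
  have "take ?k z \<in> box Os1" unfolding box_def
  proof (intro CollectI conjI allI impI)
    fix i assume "i < length Os1"
    then show "take ?k z ! i \<in> Os1 ! i" using mem[of i] by (simp add: nth_append)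
  qed (use len in simp)
  moreover have "drop ?k z \<in> box Os2" unfolding box_def
  proof (intro CollectI conjI allI impI)
    fix i assume "i < length Os2"
    then show "drop ?k z ! i \<in> Os2 ! i" using mem[of "?k + i"] len by simp
  qed (use len in simp)
  ultimately show "z \<in> lprod (box Os1) (box Os2)"
    unfolding lprod_def by (intro CollectI exI[of _ "take ?k z"] exI[of _ "drop ?k z"]) simp
next
  fix z assume "z \<in> lprod (box Os1) (box Os2)"
  then show "z \<in> box (Os1 @ Os2)" by (auto simp: lprod_def box_def nth_append)
qed

lemma append_mem_lprod_iff:
  "P \<subseteq> tuples n \<Longrightarrow> length a = n \<Longrightarrow> a @ b \<in> lprod P Q \<longleftrightarrow> a \<in> P \<and> b \<in> Q"
  by (auto simp: lprod_def tuples_def)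

lemma lopen_lprod:
  assumes "lopen \<tau> U" "lopen \<tau> V"
  shows "lopen \<tau> (lprod U V)"
  unfolding lopen_def
proof
  fix z assume "z \<in> lprod U V"
  then obtain a b where ab: "z = a @ b" "a \<in> U" "b \<in> V" by (auto simp: lprod_def)
  obtain Os where Os: "length Os = length a" "\<forall>i<length Os. openin \<tau> (Os ! i)" "a \<in> box Os" "box Os \<subseteq> U"
    using assms(1) ab(2) unfolding lopen_def by blast
  obtain Ps where Ps: "length Ps = length b" "\<forall>i<length Ps. openin \<tau> (Ps ! i)" "b \<in> box Ps" "box Ps \<subseteq> V"
    using assms(2) ab(3) unfolding lopen_def by blast
  have "box (Os @ Ps) \<subseteq> lprod U V" using Os(4) Ps(4) by (auto simp: box_append lprod_def)
  moreover have "z \<in> box (Os @ Ps)" using ab(1) Os(3) Ps(3) by (auto simp: box_append lprod_def)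
  moreover have "\<forall>i<length (Os @ Ps). openin \<tau> ((Os @ Ps) ! i)" using Os(2) Ps(2) by (simp add: nth_append)
  ultimately show "\<exists>Qs. length Qs = length z \<and> (\<forall>i<length Qs. openin \<tau> (Qs ! i)) \<and> z \<in> box Qs \<and> box Qs \<subseteq> lprod U V"
    using ab(1) Os(1) Ps(1) by (intro exI[of _ "Os @ Ps"]) auto
qed

lemma ropen_subset: "ropen \<tau> X U \<Longrightarrow> U \<subseteq> X"
  unfolding ropen_def by auto

lemma ropen_trans:
  assumes "ropen \<tau> X U" "ropen \<tau> U W"
  shows "ropen \<tau> X W"
proof -
  obtain O1 where O1: "lopen \<tau> O1" "U = O1 \<inter> X" using assms(1) unfolding ropen_def by blast
  obtain O2 where O2: "lopen \<tau> O2" "W = O2 \<inter> U" using assms(2) unfolding ropen_def by blast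
  have "W = (O2 \<inter> O1) \<inter> X" using O1(2) O2(2) by auto
  then show ?thesis unfolding ropen_def using lopen_Int[OF O2(1) O1(1)] by blast
qed

lemma ropen_Int_lopen:
  assumes "ropen \<tau> X U" "lopen \<tau> P"
  shows "ropen \<tau> X (P \<inter> U)"
proof -
  obtain O1 where O1: "lopen \<tau> O1" "U = O1 \<inter> X" using assms(1) unfolding ropen_def by blast
  have "P \<inter> U = (P \<inter> O1) \<inter> X" using O1(2) by auto
  then show ?thesis unfolding ropen_def using lopen_Int[OF assms(2) O1(1)] by blast
qed

lemma lcont_subset:
  assumes "lcont \<tau> X g" "U \<subseteq> X"
  shows "lcont \<tau> U g"
  unfolding lcont_def
proof (intro allI impI)
  fix V assume "lopen \<tau> V"
  then obtain O1 where "lopen \<tau> O1" "{x \<in> X. g x \<in> V} = O1 \<inter> X"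
    using assms(1) unfolding lcont_def ropen_def by blast
  moreover from this have "{x \<in> U. g x \<in> V} = O1 \<inter> U" using assms(2) by blast
  ultimately show "ropen \<tau> U {x \<in> U. g x \<in> V}" unfolding ropen_def by blast
qed

lemma lcont_cong:
  assumes "\<And>x. x \<in> X \<Longrightarrow> g x = h x"
  shows "lcont \<tau> X g = lcont \<tau> X h"
proof -
  have "{x \<in> X. g x \<in> V} = {x \<in> X. h x \<in> V}" for V using assms by auto
  then show ?thesis by (simp add: lcont_def)
qed

lemma lhomeo_cong:
  assumes fh: "\<And>u. u \<in> U \<Longrightarrow> h u = f u" and h: "lhomeo \<tau> U V h"
  shows "lhomeo \<tau> U V f"
proof -
  have "(\<lambda>x. x \<in> U \<and> h x = y) = (\<lambda>x. x \<in> U \<and> f x = y)" for y using fh by auto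
  then have "the_inv_into U h = the_inv_into U f" by (simp add: the_inv_into_def fun_eq_iff)
  moreover have "bij_betw f U V" using h bij_betw_cong[of U h f V] fh by (simp add: lhomeo_def)
  moreover have "lcont \<tau> U f" using h lcont_cong[of U h f] fh by (simp add: lhomeo_def)
  ultimately show ?thesis using h by (simp add: lhomeo_def)
qed

lemma lhomeo_restrict:
  assumes h: "lhomeo \<tau> U0 V0 f" and U: "U \<subseteq> U0"
  shows "lhomeo \<tau> U (f ` U) f"
proof -
  have bij0: "bij_betw f U0 V0" using h by (simp add: lhomeo_def)
  then have inj: "inj_on f U" using U by (meson bij_betw_def inj_on_subset)
  have "lcont \<tau> V0 (the_inv_into U0 f)" using h by (simp add: lhomeo_def)
  then have "lcont \<tau> (f ` U) (the_inv_into U0 f)" using bij0 U by (auto simp: bij_betw_def intro: lcont_subset)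
  moreover have "the_inv_into U f v = the_inv_into U0 f v" if "v \<in> f ` U" for v
    using that U bij0 inj by (auto simp: bij_betw_def the_inv_into_f_f)
  ultimately have "lcont \<tau> (f ` U) (the_inv_into U f)"
    using lcont_cong[of "f ` U" "the_inv_into U f" "the_inv_into U0 f"] by simp
  moreover have "lcont \<tau> U f" using h U by (auto simp: lhomeo_def intro: lcont_subset)
  ultimately show ?thesis using inj by (simp add: lhomeo_def bij_betw_def)
qed

lemma lhomeo_restrict_open:
  assumes h: "lhomeo \<tau> U0 V0 f" and U0: "ropen \<tau> X U0" and V0: "ropen \<tau> Y V0"
    and P: "lopen \<tau> P" and Q: "lopen \<tau> Q"
  defines "U \<equiv> {u \<in> U0. u \<in> P \<and> f u \<in> Q}"
  shows "ropen \<tau> X U" "ropen \<tau> Y (f ` U)" "lhomeo \<tau> U (f ` U) f"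
proof -
  let ?g = "the_inv_into U0 f"
  have bij0: "bij_betw f U0 V0" using h by (simp add: lhomeo_def)
  have "ropen \<tau> U0 {u \<in> U0. f u \<in> Q}" using h Q by (simp add: lhomeo_def lcont_def)
  then have "ropen \<tau> X (P \<inter> {u \<in> U0. f u \<in> Q})" by (intro ropen_Int_lopen ropen_trans[OF U0] P)
  moreover have "U = P \<inter> {u \<in> U0. f u \<in> Q}" by (auto simp: U_def)
  ultimately show "ropen \<tau> X U" by simp
  have "ropen \<tau> V0 {v \<in> V0. ?g v \<in> P}" using h P by (simp add: lhomeo_def lcont_def)
  then have "ropen \<tau> Y (Q \<inter> {v \<in> V0. ?g v \<in> P})" by (intro ropen_Int_lopen ropen_trans[OF V0] Q)
  moreover have "f ` U = Q \<inter> {v \<in> V0. ?g v \<in> P}"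
  proof (intro set_eqI iffI)
    fix v assume "v \<in> f ` U"
    then show "v \<in> Q \<inter> {v \<in> V0. ?g v \<in> P}"
      using bij0 by (auto simp: U_def bij_betw_def the_inv_into_f_f)
  next
    fix v assume v: "v \<in> Q \<inter> {v \<in> V0. ?g v \<in> P}"
    have inj0: "inj_on f U0" and "f ` U0 = V0" using bij0 by (auto simp: bij_betw_def)
    then have "v \<in> f ` U0" using v by simp
    then have "?g v \<in> U0" "f (?g v) = v"
      using the_inv_into_into[OF inj0] f_the_inv_into_f[OF inj0] by auto
    then have "?g v \<in> U" using v by (simp add: U_def)
    then show "v \<in> f ` U" using \<open>f (?g v) = v\<close> by (metis imageI)
  qed
  ultimately show "ropen \<tau> Y (f ` U)" by simp
  show "lhomeo \<tau> U (f ` U) f" using lhomeo_restrict[OF h] by (simp add: U_def)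
qed

section \<open>The generic local homeomorphism\<close>

lemma hausdorff_geometricD:
  assumes "hausdorff_geometric I \<tau>"
  shows "topspace \<tau> = UNIV" and "acl_exchange I" and "aleph1_saturated I"
proof -
  note hg = assms[unfolded hausdorff_geometric_def]
  show "topspace \<tau> = UNIV" by (rule hg[THEN conjunct1])
  show "acl_exchange I"
    using hg[THEN conjunct2, THEN conjunct2, THEN conjunct1] by (simp add: geometric_def)
  show "aleph1_saturated I" by (rule hg[THEN conjunct2, THEN conjunct2, THEN conjunct2, THEN conjunct1])
qed

lemma loreD:
  assumes "lore I \<tau> S"
  shows lore_definable: "X \<in> S \<Longrightarrow> definable I X"
    and lore_open_subset: "X \<in> S \<Longrightarrow> definable I V \<Longrightarrow> V \<subseteq> X \<Longrightarrow> ropen \<tau> X V \<Longrightarrow> V \<in> S"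
    and lore_generic_part: "countable A \<Longrightarrow> defbl I A X \<Longrightarrow> X \<noteq> {} \<Longrightarrow>
      \<exists>X'. X' \<subseteq> X \<and> ropen \<tau> X X' \<and> defbl I A X' \<and> X' \<in> S \<and> dim I (X - X') < dim I X"
proof -
  note L = assms[unfolded lore_def]
  show "X \<in> S \<Longrightarrow> definable I X" using L[THEN conjunct1] by blast
  show "X \<in> S \<Longrightarrow> definable I V \<Longrightarrow> V \<subseteq> X \<Longrightarrow> ropen \<tau> X V \<Longrightarrow> V \<in> S"
    using L[THEN conjunct2, THEN conjunct2, THEN conjunct2, THEN conjunct2, THEN conjunct2,
        THEN conjunct2, THEN conjunct2, THEN conjunct1] by blast
  show "countable A \<Longrightarrow> defbl I A X \<Longrightarrow> X \<noteq> {} \<Longrightarrow>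
      \<exists>X'. X' \<subseteq> X \<and> ropen \<tau> X X' \<and> defbl I A X' \<and> X' \<in> S \<and> dim I (X - X') < dim I X"
    using L[THEN conjunct2, THEN conjunct2, THEN conjunct2, THEN conjunct2, THEN conjunct2,
        THEN conjunct2, THEN conjunct2, THEN conjunct2, THEN conjunct2] by blast
qed

lemma t_minimal_definable_box_nhd:
  assumes tm: "t_minimal I \<tau>" and W: "lopen \<tau> W" "xs \<in> W"
  obtains Bs where "length Bs = length xs" "\<forall>i<length Bs. openin \<tau> (Bs ! i)" "xs \<in> box Bs"
    "box Bs \<subseteq> W" "definable I (box Bs)"
proof -
  obtain \<phi> k where \<phi>: "fv \<phi> \<subseteq> {..<Suc k}"
    "\<forall>bs. length bs = k \<longrightarrow> openin \<tau> {a. sat I (env (a # bs)) \<phi>}"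
    "\<forall>U a. openin \<tau> U \<and> a \<in> U \<longrightarrow>
       (\<exists>bs. length bs = k \<and> a \<in> {c. sat I (env (c # bs)) \<phi>} \<and> {c. sat I (env (c # bs)) \<phi>} \<subseteq> U)"
    using tm[unfolded t_minimal_def, THEN conjunct2, THEN conjunct1] by blast
  obtain Ps where Ps: "length Ps = length xs" "\<forall>i<length Ps. openin \<tau> (Ps ! i)" "xs \<in> box Ps" "box Ps \<subseteq> W"
    using W unfolding lopen_def by blast
  have "\<exists>bs. length bs = k \<and> xs ! i \<in> {c. sat I (env (c # bs)) \<phi>} \<and> {c. sat I (env (c # bs)) \<phi>} \<subseteq> Ps ! i"
    if "i < length xs" for i
    using \<phi>(3)[rule_format, of "Ps ! i" "xs ! i"] Ps(1-3) that by (simp add: box_def)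
  then have "\<forall>i. \<exists>bs. i < length xs \<longrightarrow> length bs = k \<and> xs ! i \<in> {c. sat I (env (c # bs)) \<phi>} \<and>
      {c. sat I (env (c # bs)) \<phi>} \<subseteq> Ps ! i"
    by blast
  from choice[OF this] obtain bs where bs: "\<forall>i<length xs. length (bs i) = k \<and>
      xs ! i \<in> {c. sat I (env (c # bs i)) \<phi>} \<and> {c. sat I (env (c # bs i)) \<phi>} \<subseteq> Ps ! i"
    by blast
  define Bs where "Bs = map (\<lambda>i. {c. sat I (env (c # bs i)) \<phi>}) [0..<length xs]"
  show ?thesis
  proof (rule that)
    show "length Bs = length xs" by (simp add: Bs_def)
    show "\<forall>i<length Bs. openin \<tau> (Bs ! i)" using \<phi>(2) bs by (simp add: Bs_def)
    show "xs \<in> box Bs" using bs by (simp add: Bs_def box_def)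
    have "box Bs \<subseteq> box Ps" using bs Ps(1) by (auto simp: Bs_def box_def)
    then show "box Bs \<subseteq> W" using Ps(4) by blast
    show "definable I (box Bs)" unfolding Bs_def using bs by (intro definable_box[OF \<phi>(1)]) simp
  qed
qed

lemma generic_local_homeo:
  fixes I :: "'r \<Rightarrow> 'a list \<Rightarrow> bool"
  assumes hg: "hausdorff_geometric I \<tau>" and cA: "countable A"
    and XT: "X \<subseteq> tuples n" and YT: "Y \<subseteq> tuples m"
    and X: "defbl I A X" and Y: "defbl I A Y" and dim_XY: "dim I X = dim I Y"
    and fXY: "f ` X \<subseteq> Y" and Z: "defbl I A (graph X f)" and fin: "\<forall>y\<in>Y. finite {u \<in> X. f u = y}"
    and x: "x \<in> X" "dim_tp I x A = dim I X"
  obtains U0 V0 where "ropen \<tau> X U0" "x \<in> U0" "ropen \<tau> Y V0" "f x \<in> V0" "lhomeo \<tau> U0 V0 f"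
proof -
  have ex: "acl_exchange I" and satu: "aleph1_saturated I"
    using hausdorff_geometricD[OF hg] by simp_all
  have fXT: "f ` X \<subseteq> tuples m" using fXY YT by blast
  have graph_iff: "u @ v \<in> graph X f \<longleftrightarrow> u \<in> X \<and> v = f u" if "length u = n" for u v
    using append_mem_graph_iff[OF XT that] .
  have len: "length u = n" if "u \<in> X" for u using that XT by (auto simp: tuples_def)
  have "definable I (graph X f)" using defbl_mono[OF subset_UNIV Z] by (simp add: definable_def)
  then have dim_Z: "dim I (graph X f) = dim I X" by (rule dim_graph[OF ex satu _ XT fXT])
  have gen: "dim_tp I (x @ f x) A = dim I (graph X f)"
    by (rule dim_tp_graph_generic[OF ex satu cA Z XT fXT x])
  note axiom5 = hg[unfolded hausdorff_geometric_def, THEN conjunct2, THEN conjunct2,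
      THEN conjunct2, THEN conjunct2, THEN conjunct2, THEN conjunct2, rule_format]
  have ZXY: "graph X f \<subseteq> lprod X Y" using fXY by (auto simp: graph_def lprod_def)
  have fin_X: "\<forall>u\<in>X. finite {v \<in> Y. u @ v \<in> graph X f}"
  proof
    fix u assume "u \<in> X"
    then have "{v \<in> Y. u @ v \<in> graph X f} \<subseteq> {f u}" using graph_iff[OF len] by auto
    then show "finite {v \<in> Y. u @ v \<in> graph X f}" by (rule finite_subset) simp
  qed
  have fin_Y: "\<forall>v\<in>Y. finite {u \<in> X. u @ v \<in> graph X f}"
  proof
    fix v assume "v \<in> Y"
    have "{u \<in> X. u @ v \<in> graph X f} \<subseteq> {u \<in> X. f u = v}" by (auto simp: graph_iff len)
    then show "finite {u \<in> X. u @ v \<in> graph X f}" using fin \<open>v \<in> Y\<close> by (auto intro: finite_subset)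
  qed
  have xfx: "x @ f x \<in> graph X f" and fxY: "f x \<in> Y" using x(1) fXY by (auto simp: graph_def)
  have dim_Y: "dim I Y = dim I (graph X f)" using dim_XY dim_Z by simp
  have "\<exists>U V h. ropen \<tau> X U \<and> x \<in> U \<and> ropen \<tau> Y V \<and> f x \<in> V \<and>
      lhomeo \<tau> U V h \<and> graph X f \<inter> lprod U V = graph U h"
    using cA XT YT X Y Z ZXY dim_Z[symmetric] dim_Y fin_X fin_Y xfx x(1) fxY gen
    by (intro axiom5[of A X n Y m "graph X f" x "f x"] conjI) assumption+
  then obtain U0 V0 h where U0: "ropen \<tau> X U0" "x \<in> U0" and V0: "ropen \<tau> Y V0" "f x \<in> V0"
    and h: "lhomeo \<tau> U0 V0 h" "graph X f \<inter> lprod U0 V0 = graph U0 h"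
    by blast
  have "h u = f u" if "u \<in> U0" for u
  proof -
    have "u @ h u \<in> graph X f" using h(2) that by (auto simp: graph_def)
    moreover have "u \<in> X" using ropen_subset[OF U0(1)] that by blast
    ultimately show ?thesis using graph_iff[OF len, of u "h u"] by simp
  qed
  then have "lhomeo \<tau> U0 V0 f" by (rule lhomeo_cong[OF _ h(1)])
  then show ?thesis using that U0 V0 by blast
qed

text \<open>By lore axiom (iv), a generic point avoids the lower-dimensional non-loric part.\<close>

lemma generic_mem_loric_part:
  fixes I :: "'r \<Rightarrow> 'a list \<Rightarrow> bool"
  assumes ex: "acl_exchange I" and satu: "aleph1_saturated I" and lr: "lore I \<tau> S"
    and cA: "countable A" and Z: "defbl I A Z" and z: "z \<in> Z" "dim_tp I z A = dim I Z"
  obtains Z' where "Z' \<in> S" "ropen \<tau> Z Z'" "z \<in> Z'"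
proof -
  obtain Z' where Z': "Z' \<subseteq> Z" "ropen \<tau> Z Z'" "defbl I A Z'" "Z' \<in> S" "dim I (Z - Z') < dim I Z"
    using lore_generic_part[OF lr cA Z] z(1) by blast
  have "z \<in> Z'"
  proof (rule ccontr)
    assume "z \<notin> Z'"
    obtain N where "Z \<subseteq> tuples N" using defbl_tuples[OF Z] by blast
    then have "defbl I A (Z - Z')" using defbl_Diff[OF Z Z'(3)] Z'(1) by blast
    then have "dim_tp I z A \<le> dim I (Z - Z')"
      using dim_tp_le_dim[OF ex satu cA] z(1) \<open>z \<notin> Z'\<close> by blast
    then show False using Z'(5) z(2) by simp
  qed
  then show ?thesis using that Z'(2,4) by blast
qed

lemma t_minimal_definable_prod_nhd:
  fixes I :: "'r \<Rightarrow> 'a list \<Rightarrow> bool"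
  assumes tm: "t_minimal I \<tau>" and W: "lopen \<tau> W" "x @ y \<in> W" and U: "lopen \<tau> U" "x \<in> U"
  obtains P Q where "lopen \<tau> P" "lopen \<tau> Q" "x \<in> P" "y \<in> Q" "P \<subseteq> U \<inter> tuples (length x)"
    "Q \<subseteq> tuples (length y)" "lprod P Q \<subseteq> W" "definable I (lprod P Q)"
proof -
  let ?n = "length x" and ?m = "length y"
  have "hausdorff_geometric I \<tau>" using tm by (simp add: t_minimal_def)
  then have top: "topspace \<tau> = UNIV" by (rule hausdorff_geometricD(1))
  let ?W = "W \<inter> lprod (U \<inter> tuples ?n) (tuples ?m)"
  have "lopen \<tau> ?W" using W(1) U(1) lopen_tuples[OF top] by (intro lopen_Int lopen_lprod)
  moreover have "x @ y \<in> ?W" using W(2) U(2) by (auto simp: lprod_def tuples_def)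
  ultimately obtain Bs where Bs: "length Bs = length (x @ y)" "\<forall>i<length Bs. openin \<tau> (Bs ! i)"
    "x @ y \<in> box Bs" "box Bs \<subseteq> ?W" "definable I (box Bs)"
    by (rule t_minimal_definable_box_nhd[OF tm])
  define P where "P = box (take ?n Bs)"
  define Q where "Q = box (drop ?n Bs)"
  have PT: "P \<subseteq> tuples ?n" and QT: "Q \<subseteq> tuples ?m"
    using box_subset_tuples[of "take ?n Bs"] box_subset_tuples[of "drop ?n Bs"] Bs(1)
    by (simp_all add: P_def Q_def)
  have PQ: "lprod P Q = box Bs"
    using box_append[of "take ?n Bs" "drop ?n Bs"] by (simp add: P_def Q_def)
  have xP: "x \<in> P" and yQ: "y \<in> Q"
    using Bs(3) append_mem_lprod_iff[OF PT, of x y Q] by (simp_all add: PQ)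
  have "P \<subseteq> U"
  proof
    fix u assume u: "u \<in> P"
    then have "u @ y \<in> lprod P Q" using yQ by (auto simp: lprod_def)
    then have "u @ y \<in> lprod (U \<inter> tuples ?n) (tuples ?m)" using PQ Bs(4) by blast
    moreover have "length u = ?n" using u PT by (auto simp: tuples_def)
    ultimately show "u \<in> U" using append_mem_lprod_iff[of "U \<inter> tuples ?n" ?n u y "tuples ?m"] by auto
  qed
  show ?thesis
  proof (rule that)
    show "lopen \<tau> P" "lopen \<tau> Q" using Bs(1,2) unfolding P_def Q_def by (auto intro!: lopen_box)
    show "x \<in> P" "y \<in> Q" "Q \<subseteq> tuples ?m" by (fact xP yQ QT)+
    show "P \<subseteq> U \<inter> tuples ?n" using \<open>P \<subseteq> U\<close> PT by blast
    show "lprod P Q \<subseteq> W" using PQ Bs(4) by blast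
    show "definable I (lprod P Q)" using PQ Bs(5) by simp
  qed
qed

text \<open>
  Shrinking a homeomorphism to a definable product neighbourhood of a point of a loric open
  part of its graph makes it loric: the graph of the restriction is open and definable in
  that part, hence loric by lore axiom (iii).
\<close>

lemma loric_homeo_near:
  fixes I :: "'r \<Rightarrow> 'a list \<Rightarrow> bool"
  assumes tm: "t_minimal I \<tau>" and lr: "lore I \<tau> S"
    and XT: "X \<subseteq> tuples n" and fXT: "f ` X \<subseteq> tuples m"
    and U0: "ropen \<tau> X U0" "x \<in> U0" and V0: "ropen \<tau> Y V0" and f: "lhomeo \<tau> U0 V0 f"
    and Z': "Z' \<in> S" "ropen \<tau> (graph X f) Z'" "x @ f x \<in> Z'"
  shows "\<exists>U V. ropen \<tau> X U \<and> x \<in> U \<and> ropen \<tau> Y V \<and> f x \<in> V \<and> loric_homeo \<tau> S U V f"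
proof -
  obtain OU where OU: "lopen \<tau> OU" "U0 = OU \<inter> X" using U0(1) unfolding ropen_def by blast
  obtain O' where O': "lopen \<tau> O'" "Z' = O' \<inter> graph X f" using Z'(2) unfolding ropen_def by blast
  have len: "length u = n" "length (f u) = m" if "u \<in> X" for u
    using that XT fXT by (auto simp: tuples_def)
  have xX: "x \<in> X" using U0(2) OU(2) by blast
  have "x @ f x \<in> O'" "x \<in> OU" using Z'(3) O'(2) U0(2) OU(2) by blast+
  then obtain P Q where PQ: "lopen \<tau> P" "lopen \<tau> Q" "x \<in> P" "f x \<in> Q"
    "P \<subseteq> OU \<inter> tuples (length x)" "Q \<subseteq> tuples (length (f x))" "lprod P Q \<subseteq> O'"
    "definable I (lprod P Q)"
    by (rule t_minimal_definable_prod_nhd[OF tm O'(1) _ OU(1)])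
  have PT: "P \<subseteq> tuples n" and QT: "Q \<subseteq> tuples m" using PQ(5,6) len[OF xX] by auto
  define U where "U = {u \<in> U0. u \<in> P \<and> f u \<in> Q}"
  have U: "ropen \<tau> X U" "ropen \<tau> Y (f ` U)" "lhomeo \<tau> U (f ` U) f"
    using lhomeo_restrict_open[OF f U0(1) V0 PQ(1,2)] by (simp_all add: U_def)
  have xU: "x \<in> U" using U0(2) PQ(3,4) by (simp add: U_def)
  have prod_iff: "u @ v \<in> lprod P Q \<longleftrightarrow> u \<in> P \<and> v \<in> Q" if "u \<in> X" for u v
    using append_mem_lprod_iff[OF PT len(1)[OF that]] .
  have "graph U f = Z' \<inter> lprod P Q"
  proof (intro set_eqI iffI)
    fix z assume "z \<in> graph U f"
    then obtain u where u: "u \<in> U" "z = u @ f u" by (auto simp: graph_def)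
    then have uX: "u \<in> X" using ropen_subset[OF U(1)] by blast
    have "z \<in> lprod P Q" using u prod_iff[OF uX] by (simp add: U_def)
    moreover have "z \<in> graph X f" using u(2) uX by (auto simp: graph_def)
    ultimately show "z \<in> Z' \<inter> lprod P Q" using PQ(7) O'(2) by blast
  next
    fix z assume z: "z \<in> Z' \<inter> lprod P Q"
    then obtain u where u: "u \<in> X" "z = u @ f u" using O'(2) by (auto simp: graph_def)
    then have "u \<in> P" "f u \<in> Q" using z prod_iff[OF u(1)] by auto
    then have "u \<in> U" using PQ(5) u(1) OU(2) by (auto simp: U_def)
    then show "z \<in> graph U f" using u(2) by (auto simp: graph_def)
  qed
  moreover have "definable I (Z' \<inter> lprod P Q)"
  proof -
    have "Z' \<subseteq> tuples (n + m)" using O'(2) graph_subset_tuples[OF XT fXT] by blast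
    moreover have "lprod P Q \<subseteq> tuples (n + m)" using PT QT by (auto simp: lprod_def tuples_def subset_iff)
    moreover have "definable I Z'" by (rule lore_definable[OF lr Z'(1)])
    ultimately show ?thesis
      using PQ(8) defbl_Int[of I UNIV Z' "lprod P Q" "n + m"] by (simp add: definable_def)
  qed
  moreover have "ropen \<tau> Z' (Z' \<inter> lprod P Q)"
    using lopen_lprod[OF PQ(1,2)] unfolding ropen_def by blast
  ultimately have "graph U f \<in> S" using lore_open_subset[OF lr Z'(1)] by simp
  then show ?thesis using U xU by (auto simp: loric_homeo_def)
qed

theorem lemma2p16:
  fixes I :: "'r \<Rightarrow> 'a list \<Rightarrow> bool" and \<tau> :: "'a topology"
    and S :: "'a list set set" and A :: "'a set"
    and X Y :: "'a list set" and n m :: nat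
    and f :: "'a list \<Rightarrow> 'a list" and x :: "'a list"
  assumes "t_minimal I \<tau>"
    and "lore I \<tau> S"
    and "countable A"
    and "X \<subseteq> tuples n" and "Y \<subseteq> tuples m"
    and "defbl I A X" and "defbl I A Y"
    and "dim I X = dim I Y"
    and "f ` X \<subseteq> Y"
    and "defbl I A (graph X f)"
    and "\<forall>y\<in>Y. finite {u \<in> X. f u = y}"
    and "x \<in> X" and "dim_tp I x A = dim I X"
  shows "\<exists>U V. ropen \<tau> X U \<and> x \<in> U \<and> ropen \<tau> Y V \<and> f x \<in> V \<and>
           loric_homeo \<tau> S U V f"
proof -
  have hg: "hausdorff_geometric I \<tau>" using assms(1) by (simp add: t_minimal_def)
  then have ex: "acl_exchange I" and satu: "aleph1_saturated I"
    by (simp_all add: hausdorff_geometricD)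
  have fXT: "f ` X \<subseteq> tuples m" using assms(5,9) by blast
  obtain U0 V0 where U0: "ropen \<tau> X U0" "x \<in> U0" and V0: "ropen \<tau> Y V0" and f: "lhomeo \<tau> U0 V0 f"
    using generic_local_homeo[OF hg assms(3-13)] by blast
  have "dim_tp I (x @ f x) A = dim I (graph X f)"
    by (rule dim_tp_graph_generic[OF ex satu assms(3,10,4) fXT assms(12,13)])
  moreover have "x @ f x \<in> graph X f" using assms(12) by (auto simp: graph_def)
  ultimately obtain Z' where "Z' \<in> S" "ropen \<tau> (graph X f) Z'" "x @ f x \<in> Z'"
    using generic_mem_loric_part[OF ex satu assms(2,3,10)] by blast
  then show ?thesis by (rule loric_homeo_near[OF assms(1,2,4) fXT U0 V0 f])
qed

end
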